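(* Let $F$ be an algebraically closed field of characteristic $\neq 2$, $R=F[t]$ with the involution ${}^*$ described in the context. Let $0\le r\le n$ and let $f_1,\ldots,f_n$ be a sequence of homogeneous elements of $R$ such that $f_1,\ldots,f_r$ are monic, each dividing the next one, and $f_{r+1}=\cdots=f_n=0$. Then $f_1,\ldots,f_n$ is the list of invariant factors of some hermitian (resp. skew-hermitian) matrix $A\in M_n(R)$ of rank $r$ if and only if the following two conditions hold: (i) every maximal run $f_i,f_{i+1},\ldots,f_j$ of consecutive terms that are nonzero and odd (resp. nonzero and even) has even length $j-i+1$; write such a run as $g_i,h_i,g_{i+2},h_{i+2},\ldots,g_{j-1},h_{j-1}$ (so $g_k=f_k$, $h_k=f_{k+1}$ for $k=i,i+2,\ldots,j-1$); (ii) for each such pair $(g_k,h_k)$ one has $h_k=g_kp_kp_k^*$ for some pure $p_k\in R$.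
   Context: $R=F[t]$ is the polynomial ring over $F$, and ${}^*$ is the $F$-algebra involution of $R$ that is the identity on $F$ and sends $t$ to $-t$. An element $a\in R$ is even if $a^*=a$, odd if $a^*=-a$, and homogeneous if it is even or odd. A nonzero $a\in R$ is pure if $\gcd(a,a^* )=1$. For $A=(a_{ij})\in M_n(R)$, $A^*$ is the matrix whose $(i,j)$ entry is $a_{ji}^*$; $A$ is hermitian if $A^*=A$ and skew-hermitian if $A^*=-A$. The invariant factors of $A$ are the diagonal entries of its Smith normal form over the PID $R$, the nonzero ones normalized to be monic. *)

theory Defs
  imports "HOL-Computational_Algebra.Polynomial" "Jordan_Normal_Form.Determinant"
    "Jordan_Normal_Form.DL_Submatrix"
begin

definition pstar :: "'a::comm_ring_1 poly \<Rightarrow> 'a poly" where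
  "pstar p = pcompose p [:0, -1:]"

definition even_poly :: "'a::comm_ring_1 poly \<Rightarrow> bool" where
  "even_poly a \<longleftrightarrow> pstar a = a"

definition odd_poly :: "'a::comm_ring_1 poly \<Rightarrow> bool" where
  "odd_poly a \<longleftrightarrow> pstar a = - a"

definition homogeneous :: "'a::comm_ring_1 poly \<Rightarrow> bool" where
  "homogeneous a \<longleftrightarrow> even_poly a \<or> odd_poly a"

definition pure :: "'a::field poly \<Rightarrow> bool" where
  "pure a \<longleftrightarrow> a \<noteq> 0 \<and> coprime a (pstar a)"

definition mat_star :: "'a::comm_ring_1 poly mat \<Rightarrow> 'a poly mat" where
  "mat_star A = mat (dim_col A) (dim_row A) (\<lambda>(i,j). pstar (A $$ (j,i)))"

definition hermitian :: "'a::comm_ring_1 poly mat \<Rightarrow> bool" where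
  "hermitian A \<longleftrightarrow> mat_star A = A"

definition skew_hermitian :: "'a::comm_ring_1 poly mat \<Rightarrow> bool" where
  "skew_hermitian A \<longleftrightarrow> mat_star A = - A"

definition diag_list :: "'a::zero list \<Rightarrow> 'a mat" where
  "diag_list fs = mat (length fs) (length fs) (\<lambda>(i,j). if i = j then fs ! i else 0)"

definition invariant_factors :: "'a::field poly mat \<Rightarrow> 'a poly list \<Rightarrow> bool" where
  "invariant_factors A fs \<longleftrightarrow>
     (let n = length fs in
      A \<in> carrier_mat n n \<and>
      (\<forall>i. i + 1 < n \<longrightarrow> fs ! i dvd fs ! (i + 1)) \<and>
      (\<forall>i < n. fs ! i \<noteq> 0 \<longrightarrow> lead_coeff (fs ! i) = 1) \<and>
      (\<exists>P Q. P \<in> carrier_mat n n \<and> Q \<in> carrier_mat n n \<and>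
             invertible_mat P \<and> invertible_mat Q \<and> P * A * Q = diag_list fs))"

definition det_rank :: "'a::idom mat \<Rightarrow> nat" where
  "det_rank A = Max {k. \<exists>I J. I \<subseteq> {..<dim_row A} \<and> J \<subseteq> {..<dim_col A} \<and>
      card I = k \<and> card J = k \<and> det (submatrix A I J) \<noteq> 0}"

text \<open>Positions i..j (0-based, inclusive) form a maximal run of consecutive
  entries satisfying P.\<close>
definition maximal_run :: "('b \<Rightarrow> bool) \<Rightarrow> 'b list \<Rightarrow> nat \<Rightarrow> nat \<Rightarrow> bool" where
  "maximal_run P fs i j \<longleftrightarrow> i \<le> j \<and> j < length fs \<and>
     (\<forall>k. i \<le> k \<and> k \<le> j \<longrightarrow> P (fs ! k)) \<and>
     (i = 0 \<or> \<not> P (fs ! (i - 1))) \<and>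
     (j + 1 = length fs \<or> \<not> P (fs ! (j + 1)))"

definition run_conditions :: "('a::field poly \<Rightarrow> bool) \<Rightarrow> 'a poly list \<Rightarrow> bool" where
  "run_conditions P fs \<longleftrightarrow>
     (\<forall>i j. maximal_run P fs i j \<longrightarrow>
        even (j - i + 1) \<and>
        (\<forall>k. i \<le> k \<and> k < j \<and> even (k - i) \<longrightarrow>
           (\<exists>p. pure p \<and> fs ! (k + 1) = fs ! k * p * pstar p)))"

end

theory Submission
  imports Defs
begin

text \<open>
  Hermitian and skew-hermitian matrices are treated together as \<open>A\<^sup>* = c A\<close> with \<open>c = \<pm>1\<close>.

  Necessity: from \<open>P A Q = diag(f\<^sub>1, ..., f\<^sub>n)\<close> one gets an invertible \<open>W\<close> such that
  \<open>W diag(f\<^sub>1, ..., f\<^sub>n)\<close> is again \<open>c\<close>-hermitian. As \<open>f\<^sub>1 | f\<^sub>2 | ...\<close>, the orders of the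
  \<open>f\<^sub>i\<close> at \<open>t = 0\<close> increase, and comparing orders shows that \<open>W(0)\<close> is block upper triangular
  with respect to the classes of indices of equal order, so its diagonal blocks are invertible.
  A nonzero homogeneous \<open>f\<close> has parity \<open>(-1)\<^bsup>ord f\<^esup>\<close>; on a class of parity opposite to \<open>c\<close>
  the rescaled diagonal block is skew-symmetric, so the class has even size. The maximal runs of
  (i) are unions of such classes; this gives (i) and, within each pair, \<open>h = g q\<close> with \<open>q\<close> even
  and \<open>q(0) \<noteq> 0\<close>. Over an algebraically closed field such a \<open>q\<close> is \<open>p p\<^sup>*\<close> with \<open>p\<close> pure.

  Sufficiency: entries outside the runs are realised by \<open>1 \<times> 1\<close> blocks, each pair of (ii) by a
  \<open>2 \<times> 2\<close> block, and the zeros by a zero block; the block sum has the prescribed rank.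
\<close>

section \<open>The involution \<open>t \<mapsto> -t\<close>\<close>

lemma coeff_pstar: "coeff (pstar p) i = (-1) ^ i * coeff p i"
  for p :: "'a::comm_ring_1 poly"
proof (induction p arbitrary: i rule: pCons_induct)
  case 0
  then show ?case by (simp add: pstar_def)
next
  case (pCons a p)
  have "pstar (pCons a p) = [:a:] + pCons 0 (- pstar p)"
    unfolding pstar_def by (simp add: pcompose_pCons)
  then show ?case
    using pCons.IH by (cases i) simp_all
qed

lemma pstar_0 [simp]: "pstar 0 = 0"
  by (simp add: pstar_def)

lemma pstar_1 [simp]: "pstar 1 = (1 :: 'a::comm_ring_1 poly)"
  by (simp add: pstar_def one_pCons)

lemma pstar_const [simp]: "pstar [:a:] = [:a:]"
  for a :: "'a::comm_ring_1"
  by (simp add: pstar_def)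

lemma pstar_add [simp]: "pstar (p + q) = pstar p + pstar q"
  by (simp add: pstar_def pcompose_add)

lemma pstar_mult [simp]: "pstar (p * q) = pstar p * pstar q"
  for p q :: "'a::comm_ring_1 poly"
  by (simp add: pstar_def pcompose_mult)

lemma pstar_uminus [simp]: "pstar (- p) = - pstar p"
  for p :: "'a::comm_ring_1 poly"
  by (simp add: pstar_def pcompose_uminus)

lemma pstar_smult [simp]: "pstar (smult a p) = smult a (pstar p)"
  by (simp add: pstar_def pcompose_smult)

lemma pstar_pstar [simp]: "pstar (pstar p) = p"
  for p :: "'a::comm_ring_1 poly"
  by (rule poly_eqI) (simp add: coeff_pstar power_mult_distrib[symmetric])

lemma pstar_eq_0_iff [simp]: "pstar p = 0 \<longleftrightarrow> p = 0"
  for p :: "'a::comm_ring_1 poly"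
  by (metis pstar_0 pstar_pstar)

lemma poly_pstar: "poly (pstar p) x = poly p (- x)"
  for p :: "'a::comm_ring_1 poly"
  by (simp add: pstar_def poly_pcompose)

lemma pstar_linear: "pstar [:a, b:] = [:a, - b:]"
  for a b :: "'a::comm_ring_1"
  by (rule poly_eqI) (simp add: coeff_pstar coeff_pCons split: nat.splits)

interpretation pstar: comm_ring_hom "pstar :: 'a::comm_ring_1 poly \<Rightarrow> _"
  by unfold_locales simp_all

interpretation poly_at_0: comm_ring_hom "\<lambda>p. poly p (0::'a::comm_ring_1)"
  by unfold_locales simp_all

lemma order_0_factor:
  fixes f :: "'a::field poly"
  assumes "f \<noteq> 0"
  shows "f = monom 1 (order 0 f) * (f div monom 1 (order 0 f))"
    and "poly (f div monom 1 (order 0 f)) 0 \<noteq> 0"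
proof -
  have "monom 1 (order 0 f) dvd f"
    using assms by (simp add: monom_1_dvd_iff)
  then show f: "f = monom 1 (order 0 f) * (f div monom 1 (order 0 f))"
    by simp
  define u where "u = f div monom 1 (order 0 f)"
  with f assms have "u \<noteq> 0"
    by auto
  have "order 0 f = order 0 (monom 1 (order 0 f) * u)"
    using f by (simp add: u_def)
  also have "\<dots> = order 0 f + order 0 u"
    using \<open>u \<noteq> 0\<close> by (simp add: order_mult order_0_monom)
  finally have "order 0 u = 0"
    by simp
  with \<open>u \<noteq> 0\<close> show "poly (f div monom 1 (order 0 f)) 0 \<noteq> 0"
    by (simp add: order_root u_def)
qed

lemma coeff_order_0_neq_0:
  fixes f :: "'a::field poly"
  assumes "f \<noteq> 0"
  shows "coeff f (order 0 f) \<noteq> 0"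
proof -
  define u where "u = f div monom 1 (order 0 f)"
  have "coeff (monom 1 (order 0 f) * u) (order 0 f + 0) = coeff u 0"
    by (rule trans[OF coeff_monom_mult]) simp
  with order_0_factor[OF assms] show ?thesis
    by (simp add: u_def poly_0_coeff_0)
qed

lemma order_0_pstar [simp]: "order 0 (pstar p) = order 0 p"
  for p :: "'a::idom poly"
proof -
  have le: "order 0 q \<le> order 0 (pstar q)" if "q \<noteq> 0" for q :: "'a poly"
  proof -
    have "monom 1 (order 0 q) dvd q"
      using that by (simp add: monom_1_dvd_iff)
    then have "pstar (monom 1 (order 0 q)) dvd pstar q"
      by (rule pstar.hom_dvd)
    moreover have "pstar (monom 1 k) = smult ((-1) ^ k) (monom (1::'a) k)" for k
      by (rule poly_eqI) (simp add: coeff_pstar coeff_monom)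
    ultimately have "monom 1 (order 0 q) dvd pstar q"
      by (simp add: smult_dvd_cancel)
    then show ?thesis
      using that by (simp add: monom_1_dvd_iff)
  qed
  show ?thesis
  proof (cases "p = 0")
    case False
    have "order 0 (pstar p) \<le> order 0 (pstar (pstar p))"
      using False by (intro le) simp
    with le[OF False] show ?thesis by simp
  qed simp
qed

lemma homogeneous_pstar_eq:
  fixes f :: "'a::field poly"
  assumes "homogeneous f" and "f \<noteq> 0" and char: "(2::'a) \<noteq> 0"
  shows "pstar f = (-1) ^ order 0 f * f"
proof -
  define v where "v = order 0 f"
  have coeff_v: "coeff f v \<noteq> 0"
    using assms(2) by (simp add: coeff_order_0_neq_0 v_def)
  have one_neq: "(1::'a) \<noteq> -1"
    using char by (metis add_eq_0_iff2 one_add_one)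
  from assms(1) consider "pstar f = f" | "pstar f = - f"
    unfolding homogeneous_def even_poly_def odd_poly_def by blast
  then show ?thesis
  proof cases
    case 1
    then have "(-1) ^ v * coeff f v = coeff f v"
      using coeff_pstar[of f v] by simp
    then have "((-1) ^ v - 1) * coeff f v = 0"
      by (simp add: left_diff_distrib)
    then have "(-1::'a) ^ v = 1"
      using coeff_v by simp
    then have "even v"
      using one_neq by (simp add: minus_one_power_iff split: if_splits)
    with 1 show ?thesis by (simp add: v_def)
  next
    case 2
    then have "(-1) ^ v * coeff f v = - coeff f v"
      using coeff_pstar[of f v] by simp
    then have "((-1) ^ v + 1) * coeff f v = 0"
      by (simp add: distrib_right)
    then have "(-1::'a) ^ v = -1"
      using coeff_v by (simp add: add_eq_0_iff2)
    then have "odd v"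
      using one_neq by (simp add: minus_one_power_iff split: if_splits)
    with 2 show ?thesis by (simp add: v_def)
  qed
qed

section \<open>Matrices over \<open>F[t]\<close>\<close>

lemma mat_star_dims [simp]:
  "dim_row (mat_star A) = dim_col A" "dim_col (mat_star A) = dim_row A"
  by (simp_all add: mat_star_def)

lemma mat_star_index [simp]:
  "i < dim_col A \<Longrightarrow> j < dim_row A \<Longrightarrow> mat_star A $$ (i, j) = pstar (A $$ (j, i))"
  by (simp add: mat_star_def)

lemma mat_star_carrier [simp]: "A \<in> carrier_mat n m \<Longrightarrow> mat_star A \<in> carrier_mat m n"
  by (metis carrier_matD carrier_matI mat_star_dims)

lemma mat_star_mat_star [simp]: "mat_star (mat_star A) = A"
  for A :: "'a::comm_ring_1 poly mat"
  by (rule eq_matI) simp_all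

lemma mat_star_one [simp]: "mat_star (1\<^sub>m n) = (1\<^sub>m n :: 'a::comm_ring_1 poly mat)"
  by (rule eq_matI) simp_all

lemma mat_star_mult:
  fixes A B :: "'a::comm_ring_1 poly mat"
  assumes "A \<in> carrier_mat m n" and "B \<in> carrier_mat n k"
  shows "mat_star (A * B) = mat_star B * mat_star A"
proof (rule eq_matI)
  fix i j
  assume "i < dim_row (mat_star B * mat_star A)" and "j < dim_col (mat_star B * mat_star A)"
  then have i: "i < k" and j: "j < m"
    using assms by auto
  have "mat_star (A * B) $$ (i, j) = (\<Sum>l = 0..<n. pstar (A $$ (j, l)) * pstar (B $$ (l, i)))"
    using assms i j by (simp add: scalar_prod_def pstar.hom_sum)
  also have "\<dots> = (mat_star B * mat_star A) $$ (i, j)"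
    using assms i j by (simp add: scalar_prod_def mult.commute)
  finally show "mat_star (A * B) $$ (i, j) = (mat_star B * mat_star A) $$ (i, j)" .
qed (use assms in simp_all)

lemma invertible_matI:
  assumes "A \<in> carrier_mat n n" "B \<in> carrier_mat n n" "A * B = 1\<^sub>m n" "B * A = 1\<^sub>m n"
  shows "invertible_mat A"
  using assms unfolding invertible_mat_def inverts_mat_def by auto

lemma invertible_matE:
  assumes "invertible_mat A" and "A \<in> carrier_mat n n"
  obtains B where "B \<in> carrier_mat n n" "A * B = 1\<^sub>m n" "B * A = 1\<^sub>m n"
proof -
  from assms obtain B where AB: "A * B = 1\<^sub>m n" and BA: "B * A = 1\<^sub>m (dim_row B)"
    unfolding invertible_mat_def inverts_mat_def by auto
  have "dim_col B = n"
    using arg_cong[OF AB, of dim_col] by simp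
  moreover have "dim_row B = n"
    using arg_cong[OF BA, of dim_col] assms(2) by simp
  ultimately have "B \<in> carrier_mat n n" by auto
  with AB BA that show ?thesis by auto
qed

lemma invertible_mat_one: "invertible_mat (1\<^sub>m n :: 'a::semiring_1 mat)"
  by (rule invertible_matI[of _ n "1\<^sub>m n"]) simp_all

lemma invertible_mat_mult:
  fixes A B :: "'a::semiring_1 mat"
  assumes A: "A \<in> carrier_mat n n" "invertible_mat A" and B: "B \<in> carrier_mat n n" "invertible_mat B"
  shows "invertible_mat (A * B)"
proof -
  obtain A' where A': "A' \<in> carrier_mat n n" "A * A' = 1\<^sub>m n" "A' * A = 1\<^sub>m n"
    using A by (elim invertible_matE)
  obtain B' where B': "B' \<in> carrier_mat n n" "B * B' = 1\<^sub>m n" "B' * B = 1\<^sub>m n"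
    using B by (elim invertible_matE)
  have "B * (B' * A') = A'"
    using assoc_mult_mat[OF B(1) B'(1) A'(1)] B'(2) A'(1) by simp
  then have AB: "A * B * (B' * A') = 1\<^sub>m n"
    using assoc_mult_mat[OF A(1) B(1) mult_carrier_mat[OF B'(1) A'(1)]] A'(2) by simp
  have "A' * (A * B) = B"
    using assoc_mult_mat[OF A'(1) A(1) B(1)] A'(3) B(1) by simp
  then have BA: "B' * A' * (A * B) = 1\<^sub>m n"
    using assoc_mult_mat[OF B'(1) A'(1) mult_carrier_mat[OF A(1) B(1)]] B'(3) by simp
  from A B A' B' AB BA show ?thesis
    by (intro invertible_matI[of _ n "B' * A'"]) simp_all
qed

lemma invertible_mat_star:
  fixes A :: "'a::comm_ring_1 poly mat"
  assumes "A \<in> carrier_mat n n" and "invertible_mat A"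
  shows "invertible_mat (mat_star A)"
proof -
  obtain B where B: "B \<in> carrier_mat n n" "A * B = 1\<^sub>m n" "B * A = 1\<^sub>m n"
    using assms by (elim invertible_matE)
  have "mat_star A * mat_star B = 1\<^sub>m n" "mat_star B * mat_star A = 1\<^sub>m n"
    using assms(1) B by (simp_all flip: mat_star_mult)
  with assms(1) B(1) show ?thesis
    by (intro invertible_matI[of _ n "mat_star B"]) simp_all
qed

lemma diag_list_dims [simp]:
  "dim_row (diag_list xs) = length xs" "dim_col (diag_list xs) = length xs"
  by (simp_all add: diag_list_def)

lemma diag_list_carrier [simp]: "diag_list xs \<in> carrier_mat (length xs) (length xs)"
  by (simp add: diag_list_def)

lemma mult_diag_list_index:
  assumes "A \<in> carrier_mat m (length xs)" and "i < m" and "j < length xs"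
  shows "(A * diag_list xs) $$ (i, j) = A $$ (i, j) * xs ! j"
proof -
  have "(A * diag_list xs) $$ (i, j) = (\<Sum>k = 0..<length xs. A $$ (i, k) * (if k = j then xs ! k else 0))"
    using assms by (simp add: diag_list_def scalar_prod_def)
  also have "\<dots> = (\<Sum>k = 0..<length xs. if k = j then A $$ (i, k) * xs ! k else 0)"
    by (rule sum.cong) auto
  also have "\<dots> = A $$ (i, j) * xs ! j"
    using assms(3) by (simp add: sum.delta')
  finally show ?thesis .
qed

lemma det_diag_list: "det (diag_list xs) = prod_list xs"
  for xs :: "'a::comm_ring_1 list"
proof -
  have "det (diag_list xs) = prod_list (diag_mat (diag_list xs))"
    by (rule det_upper_triangular[of _ "length xs"]) (auto simp: diag_list_def)
  also have "diag_mat (diag_list xs) = xs"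
    by (rule nth_equalityI) (auto simp: diag_mat_def diag_list_def)
  finally show ?thesis .
qed

lemma det_block_upper_triangular:
  fixes M :: "'a::idom mat"
  assumes M: "M \<in> carrier_mat (k + m) (k + m)"
    and zero: "\<And>i j. k \<le> i \<Longrightarrow> i < k + m \<Longrightarrow> j < k \<Longrightarrow> M $$ (i, j) = 0"
  shows "det M = det (mat k k (\<lambda>(i, j). M $$ (i, j))) * det (mat m m (\<lambda>(i, j). M $$ (i + k, j + k)))"
proof -
  have dims: "dim_row M = k + m" "dim_col M = k + m"
    using M by auto
  have "mat m k (\<lambda>(i, j). M $$ (i + k, j)) = 0\<^sub>m m k"
    by (rule eq_matI) (simp_all add: zero)
  then have "split_block M k k = (mat k k (\<lambda>(i, j). M $$ (i, j)), mat k m (\<lambda>(i, j). M $$ (i, j + k)),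
      0\<^sub>m m k, mat m m (\<lambda>(i, j). M $$ (i + k, j + k)))"
    by (simp add: split_block_def dims case_prod_beta')
  note blocks = split_block[OF this dims]
  show ?thesis
    by (subst blocks(5)) (rule det_four_block_mat_lower_left_zero[OF blocks(1,2) refl blocks(4)])
qed

text \<open>The vanishing hypothesis says that \<open>M\<close> is block upper triangular for the partition
  \<open>[0, a), [a, b), [b, n)\<close> of the indices.\<close>

lemma det_diagonal_block_neq_0:
  fixes M :: "'a::idom mat"
  assumes M: "M \<in> carrier_mat n n" and det: "det M \<noteq> 0" and ab: "a \<le> b" "b \<le> n"
    and zero: "\<And>i j. i < n \<Longrightarrow> j < a \<and> a \<le> i \<or> j < b \<and> b \<le> i \<Longrightarrow> M $$ (i, j) = 0"
  shows "det (mat (b - a) (b - a) (\<lambda>(i, j). M $$ (i + a, j + a))) \<noteq> 0"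
proof -
  define N where "N = mat (n - a) (n - a) (\<lambda>(i, j). M $$ (i + a, j + a))"
  have "M \<in> carrier_mat (a + (n - a)) (a + (n - a))"
    using M ab by simp
  then have "det M = det (mat a a (\<lambda>(i, j). M $$ (i, j))) * det N"
    unfolding N_def by (rule det_block_upper_triangular) (simp add: zero)
  with det have "det N \<noteq> 0" by auto
  moreover have "N \<in> carrier_mat ((b - a) + (n - b)) ((b - a) + (n - b))"
    using ab by (simp add: N_def)
  then have "det N = det (mat (b - a) (b - a) (\<lambda>(i, j). N $$ (i, j)))
      * det (mat (n - b) (n - b) (\<lambda>(i, j). N $$ (i + (b - a), j + (b - a))))"
  proof (rule det_block_upper_triangular)
    fix i j
    assume "b - a \<le> i" "i < b - a + (n - b)" "j < b - a"
    then have "i + a < n" "j + a < b" "b \<le> i + a"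
      using ab by linarith+
    then show "N $$ (i, j) = 0"
      using zero[of "i + a" "j + a"] by (simp add: N_def)
  qed
  moreover have "mat (b - a) (b - a) (\<lambda>(i, j). N $$ (i, j))
      = mat (b - a) (b - a) (\<lambda>(i, j). M $$ (i + a, j + a))"
    using ab by (intro eq_matI) (simp_all add: N_def)
  ultimately show ?thesis by auto
qed

lemma det_skew_symmetric_odd:
  fixes M :: "'a::idom mat"
  assumes M: "M \<in> carrier_mat n n" and skew: "\<And>i j. i < n \<Longrightarrow> j < n \<Longrightarrow> M $$ (i, j) = - M $$ (j, i)"
    and "odd n" and char: "(2::'a) \<noteq> 0"
  shows "det M = 0"
proof -
  have "det M = det (transpose_mat M)"
    by (rule det_transpose[OF M, symmetric])
  also have "transpose_mat M = (-1) \<cdot>\<^sub>m M"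
  proof (rule eq_matI)
    fix i j
    assume "i < dim_row ((-1) \<cdot>\<^sub>m M)" and "j < dim_col ((-1) \<cdot>\<^sub>m M)"
    with M show "transpose_mat M $$ (i, j) = ((-1) \<cdot>\<^sub>m M) $$ (i, j)"
      using skew[of j i] by simp
  qed (use M in simp_all)
  also have "det ((-1) \<cdot>\<^sub>m M) = (-1) ^ n * det M"
    using M by simp
  finally have "det M = (-1) ^ n * det M" .
  moreover have "(-1::'a) ^ n = -1"
    using \<open>odd n\<close> by simp
  ultimately have "det M = - det M"
    by (simp only: mult_minus1)
  then have "det M + det M = 0"
    by (subst add_eq_0_iff2)
  then have "2 * det M = 0"
    by (simp only: mult_2)
  with char show ?thesis
    by simp
qed

lemma smult_one_mat: "(1::'a::semiring_1) \<cdot>\<^sub>m A = A"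
  by (rule eq_matI) simp_all

lemma smult_minus_one_mat: "(-1::'a::ring_1) \<cdot>\<^sub>m A = - A"
  by (rule eq_matI) simp_all

abbreviation block_diag :: "'a::zero mat \<Rightarrow> 'a mat \<Rightarrow> 'a mat" where
  "block_diag A D \<equiv> four_block_mat A (0\<^sub>m (dim_row A) (dim_col D)) (0\<^sub>m (dim_row D) (dim_col A)) D"

lemma block_diag_carrier:
  "A \<in> carrier_mat k k \<Longrightarrow> D \<in> carrier_mat m m \<Longrightarrow> block_diag A D \<in> carrier_mat (k + m) (k + m)"
  by (rule four_block_carrier_mat)

lemma block_diag_mult:
  fixes A B :: "'a::semiring_1 mat"
  assumes "A \<in> carrier_mat k k" "B \<in> carrier_mat k k" "D \<in> carrier_mat m m" "E \<in> carrier_mat m m"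
  shows "block_diag A D * block_diag B E = block_diag (A * B) (D * E)"
  using mult_four_block_mat[OF assms(1) zero_carrier_mat zero_carrier_mat assms(3)
      assms(2) zero_carrier_mat zero_carrier_mat assms(4)] assms
  by simp

lemma block_diag_invertible:
  fixes A :: "'a::semiring_1 mat"
  assumes A: "A \<in> carrier_mat k k" "invertible_mat A" and D: "D \<in> carrier_mat m m" "invertible_mat D"
  shows "invertible_mat (block_diag A D)"
proof -
  obtain A' where A': "A' \<in> carrier_mat k k" "A * A' = 1\<^sub>m k" "A' * A = 1\<^sub>m k"
    using A by (elim invertible_matE)
  obtain D' where D': "D' \<in> carrier_mat m m" "D * D' = 1\<^sub>m m" "D' * D = 1\<^sub>m m"
    using D by (elim invertible_matE)
  show ?thesis
  proof (rule invertible_matI)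
    show "block_diag A D * block_diag A' D' = 1\<^sub>m (k + m)"
      using block_diag_mult[OF A(1) A'(1) D(1) D'(1)] A' D' by simp
    show "block_diag A' D' * block_diag A D = 1\<^sub>m (k + m)"
      using block_diag_mult[OF A'(1) A(1) D'(1) D(1)] A' D' by simp
  qed (use A D A' D' in \<open>auto intro: block_diag_carrier\<close>)
qed

lemma block_diag_mat_star:
  assumes "A \<in> carrier_mat k k" and "D \<in> carrier_mat m m"
  shows "mat_star (block_diag A D) = block_diag (mat_star A) (mat_star (D :: 'a::comm_ring_1 poly mat))"
  by (rule eq_matI) (use assms in auto)

lemma block_diag_smult:
  assumes "A \<in> carrier_mat k k" and "D \<in> carrier_mat m m"
  shows "c \<cdot>\<^sub>m block_diag A D = block_diag (c \<cdot>\<^sub>m A) (c \<cdot>\<^sub>m (D :: 'a::semiring_1 mat))"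
  by (rule eq_matI) (use assms in auto)

lemma diag_list_append: "diag_list (xs @ ys) = block_diag (diag_list xs) (diag_list ys)"
  by (rule eq_matI) (auto simp: diag_list_def nth_append)

lemma det_eq_0_if_zero_row:
  fixes M :: "'a::comm_ring_1 mat"
  assumes M: "M \<in> carrier_mat n n" and "k < n" and zero: "\<And>j. j < n \<Longrightarrow> M $$ (k, j) = 0"
  shows "det M = 0"
proof -
  have "multrow k 0 M = M"
    by (rule eq_matI) (use M zero in \<open>auto simp: mat_multrow_def\<close>)
  then show ?thesis
    using det_multrow[OF \<open>k < n\<close> M, of 0] by simp
qed

lemma pick_lessThan:
  assumes "i < n"
  shows "pick {..<n} i = i"
proof -
  have "{a \<in> {..<n}. a < i} = {..<i}"
    using assms by auto
  then show ?thesis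
    using pick_card_in_set[of i "{..<n}"] assms by simp
qed

lemma le_pick: "i < card I \<Longrightarrow> i \<le> pick I i"
  using card_pick[of i I] card_mono[of "{..<pick I i}" "{a \<in> I. a < pick I i}"] by force

lemma submatrix_lessThan:
  assumes "A \<in> carrier_mat (k + m) (k + m)"
  shows "submatrix A {..<k} {..<k} = mat k k (\<lambda>(i, j). A $$ (i, j))"
proof -
  have "{i. i < k + m \<and> i \<in> {..<k}} = {..<k}"
    by auto
  with assms show ?thesis
    by (intro eq_matI) (simp_all add: dim_submatrix submatrix_index pick_lessThan)
qed

text \<open>The last row of a minor of size \<open>l > k\<close> has index at least \<open>l - 1 \<ge> k\<close>, so it runs
  through the zero rows of \<open>block_diag A 0\<close>.\<close>

lemma det_submatrix_block_diag_zero: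
  fixes A :: "'a::idom mat"
  assumes A: "A \<in> carrier_mat k k" and IJ: "I \<subseteq> {..<k + m}" "J \<subseteq> {..<k + m}"
    and card: "card I = l" "card J = l" and "k < l"
  shows "det (submatrix (block_diag A (0\<^sub>m m m)) I J) = 0"
proof -
  define B where "B = block_diag A (0\<^sub>m m m)"
  have B: "B \<in> carrier_mat (k + m) (k + m)"
    using A by (simp add: B_def block_diag_carrier)
  have rows: "{i. i < dim_row B \<and> i \<in> I} = I" and cols: "{j. j < dim_col B \<and> j \<in> J} = J"
    using IJ B by auto
  have "dim_row (submatrix B I J) = l" "dim_col (submatrix B I J) = l"
    by (simp_all only: dim_submatrix rows cols card)
  then have sub: "submatrix B I J \<in> carrier_mat l l"
    by (rule carrier_matI)
  have "l - 1 < card I" "l - 1 < l"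
    using \<open>k < l\<close> card by simp_all
  then have last: "l - 1 < l" "k \<le> pick I (l - 1)" "pick I (l - 1) < k + m"
    using \<open>k < l\<close> le_pick[of "l - 1" I] pick_in_set[of "l - 1" I] IJ(1) by auto
  have "det (submatrix B I J) = 0"
  proof (rule det_eq_0_if_zero_row[OF sub last(1)])
    fix j
    assume "j < l"
    then have "pick J j < k + m"
      using pick_in_set[of j J] IJ card by auto
    have "submatrix B I J $$ (l - 1, j) = B $$ (pick I (l - 1), pick J j)"
      using \<open>j < l\<close> last(1) card by (simp add: submatrix_index rows cols)
    also have "\<dots> = 0"
      using \<open>pick J j < k + m\<close> last(2,3) A by (simp add: B_def)
    finally show "submatrix B I J $$ (l - 1, j) = 0" .
  qed
  then show ?thesis
    by (simp add: B_def)
qed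

lemma det_rank_block_diag_zero:
  fixes A :: "'a::idom mat"
  assumes A: "A \<in> carrier_mat k k" and det: "det A \<noteq> 0"
  shows "det_rank (block_diag A (0\<^sub>m m m)) = k"
proof -
  define B where "B = block_diag A (0\<^sub>m m m)"
  have B: "B \<in> carrier_mat (k + m) (k + m)"
    using A by (simp add: B_def block_diag_carrier)
  define S where "S = {l. \<exists>I J. I \<subseteq> {..<dim_row B} \<and> J \<subseteq> {..<dim_col B} \<and>
      card I = l \<and> card J = l \<and> det (submatrix B I J) \<noteq> 0}"
  have "submatrix B {..<k} {..<k} = A"
    using submatrix_lessThan[OF B] A by (auto simp: B_def intro!: eq_matI)
  then have "k \<in> S"
    unfolding S_def using B det by (intro CollectI exI[of _ "{..<k}"]) auto
  moreover have "l \<le> k" if "l \<in> S" for l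
  proof (rule ccontr)
    assume "\<not> l \<le> k"
    from that obtain I J where "I \<subseteq> {..<k + m}" "J \<subseteq> {..<k + m}" "card I = l" "card J = l"
      and "det (submatrix B I J) \<noteq> 0"
      unfolding S_def using B by auto
    with det_submatrix_block_diag_zero[OF A] \<open>\<not> l \<le> k\<close> show False
      by (simp add: B_def)
  qed
  ultimately have "Max S = k"
    by (intro Max_eqI) (auto simp: finite_nat_set_iff_bounded_le)
  then show ?thesis
    by (simp add: det_rank_def S_def B_def)
qed

section \<open>Polynomials\<close>

lemma bezout_poly:
  fixes a b :: "'a::field poly"
  assumes "coprime a b"
  obtains u w where "u * a + w * b = 1"
proof -
  define S where "S = {d. d \<noteq> 0 \<and> (\<exists>u w. d = u * a + w * b)}"
  have "a \<noteq> 0 \<or> b \<noteq> 0"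
    using assms by auto
  moreover have "a = 1 * a + 0 * b" and "b = 0 * a + 1 * b"
    by simp_all
  ultimately have "a \<in> S \<or> b \<in> S"
    unfolding S_def by blast
  then obtain d where "d \<in> S" and least: "\<And>e. e \<in> S \<Longrightarrow> degree d \<le> degree e"
    using ex_has_least_nat[of "\<lambda>d. d \<in> S" _ degree] by blast
  then obtain u w where d: "d = u * a + w * b" and "d \<noteq> 0"
    unfolding S_def by blast
  have "d dvd x" if "x = a \<or> x = b" for x
  proof (rule ccontr)
    assume "\<not> d dvd x"
    then have "x mod d \<noteq> 0"
      by (simp add: mod_eq_0_iff_dvd)
    moreover have "x mod d = x - x div d * d"
      by (simp add: minus_div_mult_eq_mod)
    with that d have "x mod d = (if x = a then 1 - x div d * u else - (x div d * u)) * a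
        + (if x = a then - (x div d * w) else 1 - x div d * w) * b"
      by (auto simp: algebra_simps)
    ultimately have "x mod d \<in> S"
      unfolding S_def by blast
    then have "degree d \<le> degree (x mod d)"
      by (rule least)
    with degree_mod_less'[OF \<open>d \<noteq> 0\<close> \<open>x mod d \<noteq> 0\<close>] show False
      by simp
  qed
  then have "is_unit d"
    using coprime_common_divisor[OF assms] by simp
  then obtain k where "d = [:k:]" and "k \<noteq> 0"
    using \<open>d \<noteq> 0\<close> by (metis is_unit_iff_degree degree_eq_zeroE pCons_eq_0_iff)
  then have "smult (inverse k) d = 1"
    by (simp add: one_pCons)
  then have "smult (inverse k) u * a + smult (inverse k) w * b = 1"
    by (simp add: d smult_add_right)
  with that show ?thesis by blast
qed

lemma coprime_iff_no_common_root:
  fixes a b :: "'a::alg_closed_field poly"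
  assumes "a \<noteq> 0"
  shows "coprime a b \<longleftrightarrow> (\<forall>z. poly a z \<noteq> 0 \<or> poly b z \<noteq> 0)"
proof
  assume "coprime a b"
  show "\<forall>z. poly a z \<noteq> 0 \<or> poly b z \<noteq> 0"
  proof (rule ccontr)
    assume "\<not> (\<forall>z. poly a z \<noteq> 0 \<or> poly b z \<noteq> 0)"
    then obtain z where "[:- z, 1:] dvd a" "[:- z, 1:] dvd b"
      by (auto simp: poly_eq_0_iff_dvd)
    with \<open>coprime a b\<close> have "is_unit [:- z, 1:]"
      by (rule coprime_common_divisor)
    then show False
      by (simp add: is_unit_iff_degree)
  qed
next
  assume no_common_root: "\<forall>z. poly a z \<noteq> 0 \<or> poly b z \<noteq> 0"
  show "coprime a b"
  proof (rule coprimeI)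
    fix d
    assume "d dvd a" and "d dvd b"
    show "is_unit d"
    proof (rule ccontr)
      assume "\<not> is_unit d"
      moreover have "d \<noteq> 0"
        using \<open>d dvd a\<close> assms by auto
      ultimately obtain z where "poly d z = 0"
        using alg_closed_imp_poly_has_root is_unit_iff_degree by blast
      with \<open>d dvd a\<close> \<open>d dvd b\<close> no_common_root show False
        by (metis poly_eq_0_iff_dvd dvd_trans)
    qed
  qed
qed

lemma pure_iff_no_opposite_roots:
  "pure p \<longleftrightarrow> p \<noteq> 0 \<and> (\<forall>z. poly p z \<noteq> 0 \<or> poly p (- z) \<noteq> 0)"
  for p :: "'a::alg_closed_field poly"
  by (auto simp: pure_def coprime_iff_no_common_root poly_pstar)

lemma pure_smult_mult_linear:
  fixes p :: "'a::alg_closed_field poly"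
  assumes "pure p" and "poly p (- \<beta>) \<noteq> 0" and "\<beta> \<noteq> - \<beta>" and "c \<noteq> 0"
  shows "pure (smult c (p * [:- \<beta>, 1:]))"
  unfolding pure_iff_no_opposite_roots
proof (intro conjI allI)
  have "p \<noteq> 0" and "[:- \<beta>, 1:] \<noteq> 0"
    using assms(1) by (simp_all add: pure_def)
  with assms(4) show "smult c (p * [:- \<beta>, 1:]) \<noteq> 0"
    by (metis smult_eq_0_iff mult_eq_0_iff)
next
  fix z
  have roots: "poly (smult c (p * [:- \<beta>, 1:])) w = 0 \<longleftrightarrow> poly p w = 0 \<or> w = \<beta>" for w
    using assms(4) by auto
  have "poly p z \<noteq> 0 \<or> poly p (- z) \<noteq> 0"
    using assms(1) by (simp add: pure_iff_no_opposite_roots)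
  with assms(2,3) show "poly (smult c (p * [:- \<beta>, 1:])) z \<noteq> 0 \<or> poly (smult c (p * [:- \<beta>, 1:])) (- z) \<noteq> 0"
    unfolding roots by auto
qed

lemma linear_mult_pstar: "[:- \<beta>, 1:] * pstar [:- \<beta>, 1:] = - ([:- \<beta>, 1:] * [:\<beta>, 1:])"
  for \<beta> :: "'a::comm_ring_1"
  by (simp add: pstar_linear)

lemma even_poly_root_pair:
  fixes q :: "'a::alg_closed_field poly"
  assumes char: "(2::'a) \<noteq> 0" and "pstar q = q" and "poly q 0 \<noteq> 0" and "degree q \<noteq> 0"
  obtains \<alpha> q2 where "\<alpha> \<noteq> - \<alpha>" and "q = [:- \<alpha>, 1:] * [:\<alpha>, 1:] * q2"
    and "pstar q2 = q2" and "poly q2 0 \<noteq> 0" and "degree q2 < degree q"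
proof -
  obtain \<alpha> where root: "poly q \<alpha> = 0"
    using assms(4) alg_closed_imp_poly_has_root by blast
  with assms(3) have "\<alpha> \<noteq> 0"
    by auto
  have "\<alpha> \<noteq> - \<alpha>"
  proof
    assume "\<alpha> = - \<alpha>"
    then have "2 * \<alpha> = 0"
      by simp
    with char \<open>\<alpha> \<noteq> 0\<close> show False
      by simp
  qed
  have "poly q (- \<alpha>) = 0"
    using root assms(2) by (metis poly_pstar)
  define h where "h = [:- \<alpha>, 1:] * [:\<alpha>, 1:]"
  obtain q1 where q1: "q = [:- \<alpha>, 1:] * q1"
    using root by (auto simp: poly_eq_0_iff_dvd)
  with \<open>poly q (- \<alpha>) = 0\<close> \<open>\<alpha> \<noteq> - \<alpha>\<close> have "poly q1 (- \<alpha>) = 0"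
    by auto
  then obtain q2 where "q1 = [:\<alpha>, 1:] * q2"
    by (auto simp: poly_eq_0_iff_dvd)
  with q1 have q: "q = h * q2"
    by (simp only: h_def mult.assoc)
  have "h \<noteq> 0" and "degree h = 2"
    by (simp_all add: h_def)
  have "[:- \<alpha>, - 1:] = - [:\<alpha>, 1:]" and "[:\<alpha>, - 1:] = - [:- \<alpha>, 1:]"
    by simp_all
  then have "pstar h = h"
    unfolding h_def pstar_mult pstar_linear by (simp add: mult.commute)
  with q assms(2,3) have "pstar q2 = q2" and "poly q2 0 \<noteq> 0" and "q2 \<noteq> 0"
    by auto
  with q \<open>h \<noteq> 0\<close> \<open>degree h = 2\<close> have "degree q2 < degree q"
    by (simp add: degree_mult_eq)
  moreover have "q = [:- \<alpha>, 1:] * [:\<alpha>, 1:] * q2"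
    using q by (simp only: h_def)
  ultimately show ?thesis
    using that \<open>\<alpha> \<noteq> - \<alpha>\<close> \<open>pstar q2 = q2\<close> \<open>poly q2 0 \<noteq> 0\<close> by blast
qed

text \<open>One of \<open>\<pm>\<alpha>\<close>, say \<open>\<beta>\<close>, has \<open>p(-\<beta>) \<noteq> 0\<close>; then \<open>\<iota> p (t - \<beta>)\<close> with \<open>\<iota>\<^sup>2 = -1\<close>
  is again pure.\<close>

lemma pure_mult_root_pair:
  fixes p :: "'a::alg_closed_field poly"
  assumes "pure p" and "\<alpha> \<noteq> - \<alpha>"
  obtains p' where "pure p'" and "p' * pstar p' = p * pstar p * ([:- \<alpha>, 1:] * [:\<alpha>, 1:])"
proof -
  have "poly p \<alpha> \<noteq> 0 \<or> poly p (- \<alpha>) \<noteq> 0"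
    using \<open>pure p\<close> by (simp add: pure_iff_no_opposite_roots)
  then obtain \<beta> where \<beta>: "\<beta> = \<alpha> \<or> \<beta> = - \<alpha>" and "poly p (- \<beta>) \<noteq> 0"
    by (metis minus_minus)
  obtain \<iota> :: 'a where \<iota>: "\<iota> * \<iota> = -1"
    using nth_root_exists[of 2 "-1::'a"] by (auto simp: power2_eq_square)
  then have "\<iota> \<noteq> 0"
    by auto
  define p' where "p' = smult \<iota> (p * [:- \<beta>, 1:])"
  have "p' * pstar p' = smult (\<iota> * \<iota>) ((p * pstar p) * ([:- \<beta>, 1:] * pstar [:- \<beta>, 1:]))"
    by (simp only: p'_def pstar_smult pstar_mult mult_smult_left mult_smult_right smult_smult mult_ac)
  also have "\<dots> = p * pstar p * ([:- \<beta>, 1:] * [:\<beta>, 1:])"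
    by (simp only: \<iota> linear_mult_pstar smult_minus_left smult_1_left mult_minus_right minus_minus)
  also have "\<dots> = p * pstar p * ([:- \<alpha>, 1:] * [:\<alpha>, 1:])"
    using \<beta> by (auto simp: mult.commute)
  finally have "p' * pstar p' = p * pstar p * ([:- \<alpha>, 1:] * [:\<alpha>, 1:])" .
  moreover have "pure p'"
    unfolding p'_def using \<open>pure p\<close> \<open>poly p (- \<beta>) \<noteq> 0\<close> \<open>\<alpha> \<noteq> - \<alpha>\<close> \<beta> \<open>\<iota> \<noteq> 0\<close>
    by (intro pure_smult_mult_linear) auto
  ultimately show ?thesis
    using that by blast
qed

lemma even_poly_factorization:
  fixes q :: "'a::alg_closed_field poly"
  assumes char: "(2::'a) \<noteq> 0" and "even_poly q" and "poly q 0 \<noteq> 0"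
  obtains p where "pure p" and "q = p * pstar p"
proof -
  have "pstar q = q"
    using \<open>even_poly q\<close> by (simp add: even_poly_def)
  then have "\<exists>p. pure p \<and> q = p * pstar p"
    using \<open>poly q 0 \<noteq> 0\<close>
  proof (induction "degree q" arbitrary: q rule: less_induct)
    case less
    show ?case
    proof (cases "degree q = 0")
      case True
      then obtain a where q: "q = [:a:]"
        by (rule degree_eq_zeroE)
      with less.prems(2) have "a \<noteq> 0"
        by simp
      obtain y where y: "y ^ 2 = a"
        using nth_root_exists[of 2 a] by auto
      with \<open>a \<noteq> 0\<close> have "pure [:y:]"
        by (auto simp: pure_def is_unit_iff_degree)
      moreover have "q = [:y:] * pstar [:y:]"
        using y q by (simp add: power2_eq_square)
      ultimately show ?thesis
        by blast
    next
      case False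
      with char less.prems obtain \<alpha> q2 where "\<alpha> \<noteq> - \<alpha>" and q: "q = [:- \<alpha>, 1:] * [:\<alpha>, 1:] * q2"
        and "pstar q2 = q2" and "poly q2 0 \<noteq> 0" and "degree q2 < degree q"
        by (elim even_poly_root_pair)
      with less.hyps obtain p2 where "pure p2" and q2: "q2 = p2 * pstar p2"
        by blast
      obtain p where "pure p" and p: "p * pstar p = p2 * pstar p2 * ([:- \<alpha>, 1:] * [:\<alpha>, 1:])"
        by (rule pure_mult_root_pair[OF \<open>pure p2\<close> \<open>\<alpha> \<noteq> - \<alpha>\<close>])
      have "q = p * pstar p"
        by (simp only: q q2 p mult_ac)
      with \<open>pure p\<close> show ?thesis
        by blast
    qed
  qed
  with that show ?thesis
    by blast
qed

section \<open>Necessity of the run conditions\<close>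

lemma level_set_pair_start:
  fixes f :: "nat \<Rightarrow> 'b::linorder"
  assumes "i \<le> j" and mono: "\<And>k l. i \<le> k \<Longrightarrow> k \<le> l \<Longrightarrow> l \<le> j \<Longrightarrow> f k \<le> f l"
    and "even (card {m \<in> {i..j}. f m = f i})"
  shows "Suc i \<le> j" and "f (Suc i) = f i"
proof -
  have "{m \<in> {i..j}. f m = f i} \<noteq> {i}"
    using assms(3) by auto
  moreover have "i \<in> {m \<in> {i..j}. f m = f i}"
    using assms(1) by simp
  ultimately obtain m where "m \<in> {m \<in> {i..j}. f m = f i}" and "m \<noteq> i"
    by blast
  then have "Suc i \<le> m" and "m \<le> j" and "f m = f i"
    by auto
  then show "Suc i \<le> j" and "f (Suc i) = f i"
    using mono[of i "Suc i"] mono[of "Suc i" m] by simp_all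
qed

lemma even_level_set_drop_pair:
  fixes f :: "nat \<Rightarrow> 'b"
  assumes "f (Suc i) = f i" and "Suc (Suc i) \<le> k" and "k \<le> j"
    and "even (card {m \<in> {i..j}. f m = f k})"
  shows "even (card {m \<in> {Suc (Suc i)..j}. f m = f k})"
proof -
  have level: "{m \<in> {Suc (Suc i)..j}. f m = f k} = {m \<in> {i..j}. f m = f k} - {i, Suc i}"
    by auto
  show ?thesis
  proof (cases "f k = f i")
    case True
    with assms(1-3) have "{i, Suc i} \<subseteq> {m \<in> {i..j}. f m = f k}"
      by auto
    with assms(4) show ?thesis
      unfolding level by (simp add: card_Diff_subset)
  next
    case False
    with assms(1) have "{m \<in> {Suc (Suc i)..j}. f m = f k} = {m \<in> {i..j}. f m = f k}"
      unfolding level by auto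
    with assms(4) show ?thesis
      by simp
  qed
qed

lemma mono_even_level_sets_pairs:
  fixes f :: "nat \<Rightarrow> 'b::linorder"
  assumes "i \<le> j"
    and "\<And>k l. i \<le> k \<Longrightarrow> k \<le> l \<Longrightarrow> l \<le> j \<Longrightarrow> f k \<le> f l"
    and "\<And>k. i \<le> k \<Longrightarrow> k \<le> j \<Longrightarrow> even (card {m \<in> {i..j}. f m = f k})"
  shows "odd (j - i) \<and> (\<forall>k. i \<le> k \<longrightarrow> k < j \<longrightarrow> even (k - i) \<longrightarrow> f (Suc k) = f k)"
  using assms
proof (induction "j - i" arbitrary: i rule: less_induct)
  case less
  note mono = less.prems(2) and even = less.prems(3)
  have "Suc i \<le> j" and step: "f (Suc i) = f i"
    using level_set_pair_start[OF less.prems(1) mono even] less.prems(1) by simp_all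
  show ?case
  proof (cases "Suc i = j")
    case True
    with step show ?thesis
      by (auto simp: less_Suc_eq_le dest: le_antisym)
  next
    case False
    with \<open>Suc i \<le> j\<close> have "Suc (Suc i) \<le> j"
      by simp
    have IH: "odd (j - Suc (Suc i)) \<and>
        (\<forall>k. Suc (Suc i) \<le> k \<longrightarrow> k < j \<longrightarrow> even (k - Suc (Suc i)) \<longrightarrow> f (Suc k) = f k)"
      using \<open>Suc (Suc i) \<le> j\<close> mono even_level_set_drop_pair[OF step] even
      by (intro less.hyps) simp_all
    show ?thesis
    proof (intro conjI allI impI)
      have "j - i = Suc (Suc (j - Suc (Suc i)))"
        using \<open>Suc (Suc i) \<le> j\<close> by simp
      with IH show "odd (j - i)"
        by simp
      fix k
      assume "i \<le> k" "k < j" "even (k - i)"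
      then consider "k = i" | "Suc (Suc i) \<le> k" "even (k - Suc (Suc i))"
        by (cases "k = i"; cases "k = Suc i") auto
      then show "f (Suc k) = f k"
        using step IH \<open>k < j\<close> by cases auto
    qed
  qed
qed

text \<open>The runs of conditions (i) and (ii) consist of the entries of parity opposite to \<open>c\<close>:
  nonzero odd ones for hermitian (\<open>c = 1\<close>), nonzero even ones for skew-hermitian (\<open>c = -1\<close>)
  matrices.\<close>

definition opposite_parity :: "'a::comm_ring_1 poly \<Rightarrow> 'a poly \<Rightarrow> bool" where
  "opposite_parity c a \<longleftrightarrow> a \<noteq> 0 \<and> pstar a = - c * a"

text \<open>If \<open>A\<^sup>* = c A\<close> and \<open>P A Q = D\<close>, then \<open>W = Q\<^sup>* P\<^sup>-\<^sup>1\<close> gives \<open>W D = Q\<^sup>* A Q\<close>.\<close>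

lemma equivalent_diag_c_hermitian:
  fixes A :: "'a::comm_ring_1 poly mat"
  assumes A: "A \<in> carrier_mat n n" and A_star: "mat_star A = c \<cdot>\<^sub>m A"
    and P: "P \<in> carrier_mat n n" "invertible_mat P" and Q: "Q \<in> carrier_mat n n" "invertible_mat Q"
    and PAQ: "P * A * Q = D"
  obtains W where "W \<in> carrier_mat n n" "invertible_mat W" "mat_star (W * D) = c \<cdot>\<^sub>m (W * D)"
proof -
  obtain P' where P': "P' \<in> carrier_mat n n" "P * P' = 1\<^sub>m n" "P' * P = 1\<^sub>m n"
    using P by (elim invertible_matE)
  have Q_star: "mat_star Q \<in> carrier_mat n n"
    using Q by simp
  define W where "W = mat_star Q * P'"
  have W: "W \<in> carrier_mat n n"
    using Q_star P' by (simp add: W_def)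
  have "invertible_mat W"
    unfolding W_def using Q P' invertible_matI[OF P'(1) P(1) P'(3,2)]
    by (intro invertible_mat_mult invertible_mat_star) simp_all
  have "W * D = mat_star Q * (P' * (P * A * Q))"
    unfolding W_def PAQ[symmetric]
    by (rule assoc_mult_mat[OF Q_star P'(1) mult_carrier_mat[OF mult_carrier_mat[OF P(1) A] Q(1)]])
  also have "P' * (P * A * Q) = P' * P * A * Q"
    using assoc_mult_mat[OF P'(1) mult_carrier_mat[OF P(1) A] Q(1)] assoc_mult_mat[OF P'(1) P(1) A]
    by simp
  also have "\<dots> = A * Q"
    using P'(3) A by simp
  finally have WD: "W * D = mat_star Q * (A * Q)" .
  have "mat_star (mat_star Q * (A * Q)) = mat_star (A * Q) * Q"
    using mat_star_mult[OF Q_star mult_carrier_mat[OF A Q(1)]] by simp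
  also have "\<dots> = mat_star Q * (c \<cdot>\<^sub>m A) * Q"
    using mat_star_mult[OF A Q(1)] A_star by simp
  also have "\<dots> = c \<cdot>\<^sub>m (mat_star Q * (A * Q))"
    using mult_smult_distrib[OF Q_star A, of c] mult_smult_assoc_mat[OF mult_carrier_mat[OF Q_star A] Q(1), of c]
      assoc_mult_mat[OF Q_star A Q(1)] by simp
  finally have "mat_star (W * D) = c \<cdot>\<^sub>m (W * D)"
    unfolding WD .
  with W \<open>invertible_mat W\<close> that show ?thesis
    by blast
qed

locale diagonal_c_hermitian =
  fixes fs :: "'a::field poly list" and n r :: nat and c :: "'a poly" and W :: "'a poly mat"
  assumes char: "(2::'a) \<noteq> 0"
    and length_fs: "length fs = n" and r_le_n: "r \<le> n"
    and nonzero: "\<And>i. i < r \<Longrightarrow> fs ! i \<noteq> 0"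
    and zero: "\<And>i. r \<le> i \<Longrightarrow> i < n \<Longrightarrow> fs ! i = 0"
    and homogeneous: "\<And>i. i < n \<Longrightarrow> homogeneous (fs ! i)"
    and dvd: "\<And>i. i + 1 < r \<Longrightarrow> fs ! i dvd fs ! (i + 1)"
    and sign: "c = 1 \<or> c = -1"
    and W: "W \<in> carrier_mat n n" "invertible_mat W"
    and c_hermitian: "mat_star (W * diag_list fs) = c \<cdot>\<^sub>m (W * diag_list fs)"
begin

abbreviation ord :: "nat \<Rightarrow> nat" where
  "ord i \<equiv> order 0 (fs ! i)"

abbreviation W0 :: "'a mat" where
  "W0 \<equiv> map_mat (\<lambda>p. poly p 0) W"

lemma fs_dvd: "i \<le> j \<Longrightarrow> j < r \<Longrightarrow> fs ! i dvd fs ! j"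
proof (induction j rule: dec_induct)
  case (step k)
  then have "fs ! i dvd fs ! k"
    by simp
  also have "fs ! k dvd fs ! Suc k"
    using dvd[of k] step.prems by simp
  finally show ?case .
qed simp

lemma ord_mono: "i \<le> j \<Longrightarrow> j < r \<Longrightarrow> ord i \<le> ord j"
  using fs_dvd nonzero by (simp add: dvd_imp_order_le)

lemma opposite_parity_fs_iff:
  assumes "i < n"
  shows "opposite_parity c (fs ! i) \<longleftrightarrow> i < r \<and> (-1) ^ ord i = - c"
proof (cases "i < r")
  case True
  then have "pstar (fs ! i) = (-1) ^ ord i * fs ! i"
    using homogeneous_pstar_eq homogeneous nonzero char assms by blast
  moreover have "fs ! i \<noteq> 0"
    using True nonzero by simp
  moreover from this have "(-1) ^ ord i * fs ! i = - c * fs ! i \<longleftrightarrow> (-1) ^ ord i = - c"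
    by (rule mult_right_cancel)
  ultimately show ?thesis
    using True by (auto simp: opposite_parity_def)
next
  case False
  with zero assms show ?thesis
    by (simp add: opposite_parity_def)
qed

lemma opposite_parity_fs_lt: "i < n \<Longrightarrow> opposite_parity c (fs ! i) \<Longrightarrow> i < r"
  by (simp add: opposite_parity_fs_iff)

lemma entry_relation:
  assumes "i < n" and "j < n"
  shows "pstar (W $$ (j, i)) * pstar (fs ! i) = c * (W $$ (i, j) * fs ! j)"
proof -
  have "mat_star (W * diag_list fs) $$ (i, j) = pstar (W $$ (j, i) * fs ! i)"
    using assms W length_fs by (simp add: mult_diag_list_index del: index_mult_mat(1))
  moreover have "(c \<cdot>\<^sub>m (W * diag_list fs)) $$ (i, j) = c * (W $$ (i, j) * fs ! j)"
    using assms W length_fs by (simp add: mult_diag_list_index del: index_mult_mat(1))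
  ultimately show ?thesis
    using c_hermitian by simp
qed

lemma det_W0_neq_0: "det W0 \<noteq> 0"
proof -
  obtain W' where W': "W' \<in> carrier_mat n n" "W * W' = 1\<^sub>m n"
    using W by (elim invertible_matE)
  have "W0 * map_mat (\<lambda>p. poly p 0) W' = 1\<^sub>m n"
    using poly_at_0.mat_hom_mult[OF W(1) W'(1)] W'(2) by (simp add: poly_at_0.mat_hom_one)
  then have "det W0 * det (map_mat (\<lambda>p. poly p 0) W') = 1"
    using det_mult[of W0 n "map_mat (\<lambda>p. poly p 0) W'"] W(1) W'(1) by simp
  then show ?thesis
    by auto
qed

text \<open>Compare the orders at \<open>0\<close> of both sides of the entry relation.\<close>

lemma W0_eq_0:
  assumes "i < n" and "j < r" and "r \<le> i \<or> ord j < ord i"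
  shows "W0 $$ (i, j) = 0"
proof -
  have "j < n" and "fs ! j \<noteq> 0"
    using assms(2) r_le_n nonzero by simp_all
  have entry: "pstar (W $$ (i, j)) * pstar (fs ! j) = c * (W $$ (j, i) * fs ! i)"
    using entry_relation[OF \<open>j < n\<close> assms(1)] .
  have "poly (W $$ (i, j)) 0 = 0"
  proof (cases "W $$ (i, j) = 0 \<or> r \<le> i")
    case True
    with entry \<open>fs ! j \<noteq> 0\<close> zero assms(1) show ?thesis
      by auto
  next
    case False
    with assms(3) have "i < r" and "ord j < ord i" and "W $$ (i, j) \<noteq> 0"
      by auto
    with entry \<open>fs ! j \<noteq> 0\<close> have "W $$ (j, i) \<noteq> 0"
      by auto
    have "order 0 (W $$ (i, j)) + ord j = order 0 (pstar (W $$ (i, j)) * pstar (fs ! j))"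
      using \<open>W $$ (i, j) \<noteq> 0\<close> \<open>fs ! j \<noteq> 0\<close> by (simp add: order_mult)
    also have "\<dots> = order 0 (W $$ (j, i)) + ord i"
      using entry sign \<open>W $$ (j, i) \<noteq> 0\<close> nonzero[OF \<open>i < r\<close>] by (auto simp: order_mult)
    finally have "order 0 (W $$ (i, j)) \<noteq> 0"
      using \<open>ord j < ord i\<close> by linarith
    then show ?thesis
      by (simp add: order_root)
  qed
  with assms(1,2) r_le_n W(1) show ?thesis
    by simp
qed

definition order_class :: "nat \<Rightarrow> nat set" where
  "order_class k = {m. m < r \<and> ord m = ord k}"

lemma order_class_convex:
  assumes "m \<in> order_class k" "m' \<in> order_class k" "m \<le> l" "l \<le> m'"
  shows "l \<in> order_class k"
  using assms ord_mono[of m l] ord_mono[of l m'] by (auto simp: order_class_def)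

lemma order_class_interval:
  assumes "k < r"
  obtains a b where "order_class k = {a..<b}" and "a \<le> k" and "k < b" and "b \<le> r"
proof -
  have fin: "finite (order_class k)" and k: "k \<in> order_class k"
    using assms by (auto simp: order_class_def)
  define a where "a = Min (order_class k)"
  define b where "b = Max (order_class k)"
  have a: "a \<in> order_class k" and b: "b \<in> order_class k"
    using fin k by (auto simp: a_def b_def intro: Min_in Max_in)
  have "order_class k = {a..<Suc b}"
  proof (rule equalityI; rule subsetI)
    fix m
    assume "m \<in> order_class k"
    with fin show "m \<in> {a..<Suc b}"
      by (simp add: a_def b_def less_Suc_eq_le)
  next
    fix m
    assume "m \<in> {a..<Suc b}"
    with order_class_convex[OF a b] show "m \<in> order_class k"
      by simp
  qed
  moreover have "a \<le> k" "k \<le> b" "b < r"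
    using fin k b by (simp_all add: a_def b_def order_class_def)
  ultimately show ?thesis
    using that by simp
qed

lemma order_class_block_det:
  assumes "order_class k = {a..<b}" and "a \<le> k" and "k < b" and "b \<le> r"
  shows "det (mat (b - a) (b - a) (\<lambda>(i, j). W0 $$ (i + a, j + a))) \<noteq> 0"
proof (rule det_diagonal_block_neq_0)
  show "W0 \<in> carrier_mat n n" and "det W0 \<noteq> 0" and "a \<le> b" and "b \<le> n"
    using W(1) det_W0_neq_0 assms r_le_n by simp_all
  have "a \<in> order_class k" and "b - 1 \<in> order_class k"
    using assms(1-3) by simp_all
  then have "ord a = ord k" and "ord (b - 1) = ord k" and "b - 1 < r"
    by (simp_all add: order_class_def)
  fix i j
  assume "i < n" and ij: "j < a \<and> a \<le> i \<or> j < b \<and> b \<le> i"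
  then have "j < r"
    using assms(2-4) by auto
  moreover have "r \<le> i \<or> ord j < ord i"
  proof (cases "r \<le> i")
    case False
    from ij show ?thesis
    proof
      assume "j < a \<and> a \<le> i"
      with assms(1) have "j \<notin> order_class k"
        by simp
      with \<open>j < r\<close> have "ord j \<noteq> ord k"
        by (simp add: order_class_def)
      moreover have "ord j \<le> ord a" and "ord a \<le> ord i"
        using \<open>j < a \<and> a \<le> i\<close> False ord_mono by simp_all
      ultimately show ?thesis
        using \<open>ord a = ord k\<close> by simp
    next
      assume "j < b \<and> b \<le> i"
      with assms(1) have "i \<notin> order_class k"
        by simp
      with False have "ord i \<noteq> ord k"
        by (simp add: order_class_def)
      moreover have "j \<le> b - 1" and "b - 1 \<le> i"
        using \<open>j < b \<and> b \<le> i\<close> by auto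
      then have "ord j \<le> ord (b - 1)" and "ord (b - 1) \<le> ord i"
        using False \<open>b - 1 < r\<close> ord_mono by simp_all
      ultimately show ?thesis
        using \<open>ord (b - 1) = ord k\<close> by simp
    qed
  qed simp
  ultimately show "W0 $$ (i, j) = 0"
    using W0_eq_0 \<open>i < n\<close> by blast
qed

text \<open>On an order class of parity opposite to \<open>c\<close>, write \<open>f\<^sub>m = t\<^sup>e u\<^sub>m\<close> with
  \<open>u\<^sub>m(0) \<noteq> 0\<close>; dividing the entry relation by \<open>t\<^sup>e\<close> and evaluating at \<open>0\<close> makes
  \<open>(W(0)\<^sub>i\<^sub>j u\<^sub>j(0))\<close> skew-symmetric.\<close>

lemma order_class_skew:
  assumes "k < r" and "opposite_parity c (fs ! k)" and "I \<in> order_class k" and "J \<in> order_class k"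
  shows "W0 $$ (I, J) * poly (fs ! J div monom 1 (ord J)) 0
    = - (W0 $$ (J, I) * poly (fs ! I div monom 1 (ord I)) 0)"
proof -
  define e where "e = ord k"
  define u where "u m = fs ! m div monom 1 (ord m)" for m
  have "I < r" "J < r" "ord I = e" "ord J = e"
    using assms(3,4) by (simp_all add: order_class_def e_def)
  then have I: "fs ! I = monom 1 e * u I" and J: "fs ! J = monom 1 e * u J"
    using order_0_factor(1) nonzero by (metis u_def)+
  have "opposite_parity c (fs ! I)"
    using assms(1,2) \<open>I < r\<close> r_le_n \<open>ord I = e\<close> by (simp add: opposite_parity_fs_iff e_def)
  then have "pstar (fs ! I) = - c * fs ! I"
    by (simp add: opposite_parity_def)
  with entry_relation[of I J] \<open>I < r\<close> \<open>J < r\<close> r_le_n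
  have "c * (- (pstar (W $$ (J, I)) * fs ! I)) = c * (W $$ (I, J) * fs ! J)"
    by (simp add: algebra_simps)
  then have "monom 1 e * (- (pstar (W $$ (J, I)) * u I)) = monom 1 e * (W $$ (I, J) * u J)"
    using sign I J by (auto simp: algebra_simps)
  moreover have "monom 1 e \<noteq> (0 :: 'a poly)"
    by (simp add: monom_eq_0_iff)
  ultimately have "- (pstar (W $$ (J, I)) * u I) = W $$ (I, J) * u J"
    using mult_left_cancel by blast
  then have "- (poly (W $$ (J, I)) 0 * poly (u I) 0) = poly (W $$ (I, J)) 0 * poly (u J) 0"
    by (metis poly_at_0.hom_uminus poly_at_0.hom_mult poly_pstar minus_zero)
  with \<open>I < r\<close> \<open>J < r\<close> r_le_n W(1) show ?thesis
    by (simp add: u_def)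
qed

lemma even_card_order_class:
  assumes "k < r" and "opposite_parity c (fs ! k)"
  shows "even (card (order_class k))"
proof -
  obtain a b where interval: "order_class k = {a..<b}" and "a \<le> k" "k < b" "b \<le> r"
    using assms(1) by (rule order_class_interval)
  define L where "L = b - a"
  define B where "B = mat L L (\<lambda>(i, j). W0 $$ (i + a, j + a))"
  define ds where "ds = map (\<lambda>j. poly (fs ! (j + a) div monom 1 (ord (j + a))) 0) [0..<L]"
  define M where "M = B * diag_list ds"
  have B: "B \<in> carrier_mat L L"
    by (simp add: B_def)
  have D: "diag_list ds \<in> carrier_mat L L"
    using diag_list_carrier[of ds] by (simp add: ds_def)
  have M: "M \<in> carrier_mat L L"
    using B D by (simp add: M_def)
  have "det B \<noteq> 0"
    unfolding B_def L_def using interval \<open>a \<le> k\<close> \<open>k < b\<close> \<open>b \<le> r\<close> by (rule order_class_block_det)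
  moreover have "0 \<notin> set ds"
  proof
    assume "0 \<in> set ds"
    then obtain j where "j < L" and "poly (fs ! (j + a) div monom 1 (ord (j + a))) 0 = 0"
      by (auto simp: ds_def)
    moreover have "j + a < r"
      using \<open>j < L\<close> \<open>b \<le> r\<close> by (simp add: L_def)
    ultimately show False
      using order_0_factor(2) nonzero by blast
  qed
  then have "det (diag_list ds) \<noteq> 0"
    by (simp add: det_diag_list prod_list_zero_iff)
  ultimately have "det M \<noteq> 0"
    using det_mult[OF B D] by (simp add: M_def)
  have M_index: "M $$ (i, j) = W0 $$ (i + a, j + a) * poly (fs ! (j + a) div monom 1 (ord (j + a))) 0"
    if "i < L" "j < L" for i j
    using that mult_diag_list_index[of B L ds i j] by (simp add: M_def B_def ds_def)
  have "M $$ (i, j) = - M $$ (j, i)" if "i < L" "j < L" for i j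
    using that order_class_skew[OF assms, of "i + a" "j + a"] interval
    by (simp add: M_index L_def)
  then have "even L"
    using det_skew_symmetric_odd[OF M _ _ char] \<open>det M \<noteq> 0\<close> by blast
  with interval show ?thesis
    by (simp add: L_def)
qed

lemma maximal_run_member:
  assumes "maximal_run (opposite_parity c) fs i j" and "i \<le> k" and "k \<le> j"
  shows "k < r" and "opposite_parity c (fs ! k)"
proof -
  show "opposite_parity c (fs ! k)"
    using assms by (simp add: maximal_run_def)
  moreover have "k < n"
    using assms length_fs by (simp add: maximal_run_def)
  ultimately show "k < r"
    using opposite_parity_fs_lt by blast
qed

lemma opposite_parity_order_class:
  assumes "k < r" and "m \<in> order_class k"
  shows "opposite_parity c (fs ! m) \<longleftrightarrow> opposite_parity c (fs ! k)"
  using assms r_le_n by (simp add: opposite_parity_fs_iff order_class_def)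

text \<open>Parity is constant on order classes, and order classes are intervals.\<close>

lemma order_class_subset_run:
  assumes run: "maximal_run (opposite_parity c) fs i j" and "i \<le> k" and "k \<le> j"
  shows "order_class k \<subseteq> {i..j}"
proof
  fix m
  assume m: "m \<in> order_class k"
  have "k < r" and "opposite_parity c (fs ! k)"
    using maximal_run_member[OF assms] by simp_all
  then have k: "k \<in> order_class k"
    by (simp add: order_class_def)
  show "m \<in> {i..j}"
  proof (rule ccontr)
    assume "m \<notin> {i..j}"
    then consider "j < m" | "m < i"
      by force
    then show False
    proof cases
      case 1
      with \<open>k \<le> j\<close> have "Suc j \<in> order_class k"
        using order_class_convex[OF k m, of "Suc j"] by simp
      then have "opposite_parity c (fs ! Suc j)" and "Suc j < n"
        using opposite_parity_order_class[OF \<open>k < r\<close>] \<open>opposite_parity c (fs ! k)\<close> r_le_n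
        by (simp_all add: order_class_def)
      with run length_fs show False
        by (simp add: maximal_run_def)
    next
      case 2
      with \<open>i \<le> k\<close> have "i - 1 \<in> order_class k" and "i \<noteq> 0"
        using order_class_convex[OF m k, of "i - 1"] by simp_all
      then have "opposite_parity c (fs ! (i - 1))"
        using opposite_parity_order_class[OF \<open>k < r\<close>] \<open>opposite_parity c (fs ! k)\<close> by simp
      with run \<open>i \<noteq> 0\<close> show False
        by (simp add: maximal_run_def)
    qed
  qed
qed

lemma maximal_run_pairs:
  assumes run: "maximal_run (opposite_parity c) fs i j"
  shows "odd (j - i) \<and> (\<forall>k. i \<le> k \<longrightarrow> k < j \<longrightarrow> even (k - i) \<longrightarrow> ord (Suc k) = ord k)"
proof (rule mono_even_level_sets_pairs)
  show "i \<le> j"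
    using run by (simp add: maximal_run_def)
  then have "j < r"
    using maximal_run_member[OF run, of j] by simp
  then show "\<And>k l. i \<le> k \<Longrightarrow> k \<le> l \<Longrightarrow> l \<le> j \<Longrightarrow> ord k \<le> ord l"
    using ord_mono by simp
  fix k
  assume k: "i \<le> k" "k \<le> j"
  have "{m \<in> {i..j}. ord m = ord k} = order_class k"
    using order_class_subset_run[OF run k] maximal_run_member[OF run] by (auto simp: order_class_def)
  then show "even (card {m \<in> {i..j}. ord m = ord k})"
    using even_card_order_class maximal_run_member[OF run k] by simp
qed

lemma maximal_run_pair_quotient:
  assumes run: "maximal_run (opposite_parity c) fs i j" and "i \<le> k" and "k < j" and "even (k - i)"
  obtains q where "fs ! Suc k = fs ! k * q" and "even_poly q" and "poly q 0 \<noteq> 0"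
proof -
  have "Suc k < r" and opp: "opposite_parity c (fs ! k)" "opposite_parity c (fs ! Suc k)"
    using maximal_run_member[OF run] assms(2,3) by simp_all
  then obtain q where q: "fs ! Suc k = fs ! k * q"
    using dvd[of k] by (auto elim: dvdE)
  have "fs ! k \<noteq> 0" and "fs ! Suc k \<noteq> 0"
    using nonzero \<open>Suc k < r\<close> by simp_all
  with q have "q \<noteq> 0"
    by auto
  from opp q have "- c * (fs ! k * pstar q) = - c * (fs ! k * q)"
    by (simp add: opposite_parity_def algebra_simps)
  with sign \<open>fs ! k \<noteq> 0\<close> have "even_poly q"
    by (auto simp: even_poly_def)
  have "ord (Suc k) = ord k + order 0 q"
    using q \<open>fs ! Suc k \<noteq> 0\<close> by (simp add: order_mult)
  moreover have "ord (Suc k) = ord k"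
    using maximal_run_pairs[OF run] assms(2-4) by blast
  ultimately have "poly q 0 \<noteq> 0"
    using \<open>q \<noteq> 0\<close> by (simp add: order_root)
  with q \<open>even_poly q\<close> that show ?thesis
    by blast
qed

end

lemma run_conditions_if_diagonal_c_hermitian:
  fixes fs :: "'a::alg_closed_field poly list"
  assumes "diagonal_c_hermitian fs n r c W"
  shows "run_conditions (opposite_parity c) fs"
proof -
  interpret diagonal_c_hermitian fs n r c W
    by fact
  show ?thesis
    unfolding run_conditions_def
  proof (intro allI impI conjI)
    fix i j
    assume run: "maximal_run (opposite_parity c) fs i j"
    then show "even (j - i + 1)"
      using maximal_run_pairs by simp
    fix k
    assume "i \<le> k \<and> k < j \<and> even (k - i)"
    with run obtain q where q: "fs ! Suc k = fs ! k * q" "even_poly q" "poly q 0 \<noteq> 0"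
      using maximal_run_pair_quotient by blast
    obtain p where "pure p" and "q = p * pstar p"
      using even_poly_factorization[OF char q(2,3)] .
    with q(1) show "\<exists>p. pure p \<and> fs ! (k + 1) = fs ! k * p * pstar p"
      by (auto simp: mult.assoc)
  qed
qed

lemma run_conditions_if_c_hermitian:
  fixes fs :: "'a::alg_closed_field poly list"
  assumes char: "(2::'a) \<noteq> 0" and len: "length fs = n" and "r \<le> n"
    and hom: "\<forall>i < n. homogeneous (fs ! i)"
    and mon: "\<forall>i < r. lead_coeff (fs ! i) = 1"
    and dvd: "\<forall>i. i + 1 < r \<longrightarrow> fs ! i dvd fs ! (i + 1)"
    and zero: "\<forall>i. r \<le> i \<and> i < n \<longrightarrow> fs ! i = 0"
    and sign: "c = 1 \<or> c = -1"
    and "mat_star A = c \<cdot>\<^sub>m A" and "invariant_factors A fs"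
  shows "run_conditions (opposite_parity c) fs"
proof -
  obtain P Q where A: "A \<in> carrier_mat n n" and P: "P \<in> carrier_mat n n" "invertible_mat P"
    and Q: "Q \<in> carrier_mat n n" "invertible_mat Q" and PAQ: "P * A * Q = diag_list fs"
    using \<open>invariant_factors A fs\<close> len unfolding invariant_factors_def Let_def by blast
  obtain W where W: "W \<in> carrier_mat n n" "invertible_mat W"
    and c_hermitian: "mat_star (W * diag_list fs) = c \<cdot>\<^sub>m (W * diag_list fs)"
    by (rule equivalent_diag_c_hermitian[OF A \<open>mat_star A = c \<cdot>\<^sub>m A\<close> P Q PAQ])
  have "\<And>i. i < r \<Longrightarrow> fs ! i \<noteq> 0"
    using mon by fastforce
  then have "diagonal_c_hermitian fs n r c W"
    by unfold_locales (use char len \<open>r \<le> n\<close> zero hom dvd sign W c_hermitian in auto)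
  then show ?thesis
    by (rule run_conditions_if_diagonal_c_hermitian)
qed

section \<open>Sufficiency of the run conditions\<close>

definition mat2 :: "'a::zero \<Rightarrow> 'a \<Rightarrow> 'a \<Rightarrow> 'a \<Rightarrow> 'a mat" where
  "mat2 a b c d = mat 2 2 (\<lambda>(i, j). if i = 0 then if j = 0 then a else b else if j = 0 then c else d)"

lemma mat2_carrier [simp]: "mat2 a b c d \<in> carrier_mat 2 2"
  by (simp add: mat2_def)

lemma mat2_eqI:
  assumes "M \<in> carrier_mat 2 2"
    and "M $$ (0, 0) = a" "M $$ (0, 1) = b" "M $$ (1, 0) = c" "M $$ (1, 1) = d"
  shows "M = mat2 a b c d"
proof (rule eq_matI)
  fix i j
  assume "i < dim_row (mat2 a b c d)" and "j < dim_col (mat2 a b c d)"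
  then have "i = 0 \<or> i = 1" "j = 0 \<or> j = 1"
    by (auto simp: mat2_def)
  with assms show "M $$ (i, j) = mat2 a b c d $$ (i, j)"
    by (auto simp: mat2_def)
qed (use assms in \<open>auto simp: mat2_def\<close>)

lemma mat2_mult:
  "mat2 a b c d * mat2 a' b' c' d' = mat2 (a * a' + b * c') (a * b' + b * d') (c * a' + d * c') (c * b' + d * d')"
  for a b c d :: "'a::semiring_1"
proof (rule mat2_eqI)
  show "mat2 a b c d * mat2 a' b' c' d' \<in> carrier_mat 2 2"
    by (rule mult_carrier_mat[OF mat2_carrier mat2_carrier])
qed (simp_all add: mat2_def scalar_prod_def numeral_2_eq_2)

lemma mat2_one: "mat2 1 0 0 1 = (1\<^sub>m 2 :: 'a::semiring_1 mat)"
  by (rule sym, rule mat2_eqI) auto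

lemma mat2_star: "mat_star (mat2 a b c d) = mat2 (pstar a) (pstar c) (pstar b) (pstar d)"
  for a b c d :: "'a::comm_ring_1 poly"
  by (rule mat2_eqI) (auto simp: mat2_def)

lemma mat2_smult: "x \<cdot>\<^sub>m mat2 a b c d = mat2 (x * a) (x * b) (x * c) (x * d)"
  for a b c d :: "'a::semiring_1"
  by (rule mat2_eqI) (auto simp: mat2_def)

lemma diag_list_pair: "diag_list [f, g] = mat2 f 0 0 g"
  by (rule mat2_eqI) (auto simp: diag_list_def)

definition realizable :: "'a::comm_ring_1 poly \<Rightarrow> 'a poly list \<Rightarrow> bool" where
  "realizable c xs \<longleftrightarrow> (\<exists>A P Q. A \<in> carrier_mat (length xs) (length xs)
     \<and> P \<in> carrier_mat (length xs) (length xs) \<and> Q \<in> carrier_mat (length xs) (length xs)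
     \<and> invertible_mat P \<and> invertible_mat Q \<and> mat_star A = c \<cdot>\<^sub>m A \<and> P * A * Q = diag_list xs)"

lemma realizableI:
  assumes "A \<in> carrier_mat (length xs) (length xs)"
    and "P \<in> carrier_mat (length xs) (length xs)" and "Q \<in> carrier_mat (length xs) (length xs)"
    and "invertible_mat P" and "invertible_mat Q" and "mat_star A = c \<cdot>\<^sub>m A" and "P * A * Q = diag_list xs"
  shows "realizable c xs"
  using assms unfolding realizable_def by blast

lemma realizable_Nil: "realizable c []"
proof -
  have "1\<^sub>m 0 * 0\<^sub>m 0 0 * 1\<^sub>m 0 = diag_list []" and "mat_star (0\<^sub>m 0 0) = c \<cdot>\<^sub>m 0\<^sub>m 0 0"
    by (auto simp: diag_list_def)
  then show ?thesis
    unfolding realizable_def using invertible_mat_one[of 0] by force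
qed

lemma realizable_single:
  assumes "pstar f = c * f"
  shows "realizable c [f]"
proof -
  define A where "A = mat 1 1 (\<lambda>_. f)"
  have "mat_star A = c \<cdot>\<^sub>m A" and "1\<^sub>m 1 * A * 1\<^sub>m 1 = diag_list [f]"
    by (auto simp: A_def assms diag_list_def)
  then show ?thesis
    unfolding realizable_def using invertible_mat_one[of 1] by (force simp: A_def)
qed

text \<open>With a Bezout identity \<open>u p + w p\<^sup>* = 1\<close> the \<open>c\<close>-hermitian matrix
  \<open>[[0, f p], [-f p\<^sup>*, 0]]\<close> is equivalent to \<open>diag(f, f p p\<^sup>*)\<close>.\<close>

lemma realizable_pair:
  fixes f p :: "'a::field poly"
  assumes "pstar f = - c * f" and "pure p"
  shows "realizable c [f, f * p * pstar p]"
proof -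
  define s where "s = pstar p"
  obtain u w where uw: "u * p + w * s = 1"
    using \<open>pure p\<close> by (auto simp: pure_def s_def elim: bezout_poly)
  define B where "B = mat2 0 (f * p) (- (f * s)) 0"
  define P where "P = mat2 u (- w) (- s) (- p)"
  define Q where "Q = mat2 1 (u * p) 1 (- (w * s))"
  have "P * B * Q = mat2 (f * (u * p + w * s)) 0 0 (f * p * s * (u * p + w * s))"
    unfolding P_def B_def Q_def mat2_mult by (simp add: algebra_simps)
  then have PBQ: "P * B * Q = diag_list [f, f * p * pstar p]"
    by (simp only: uw mult_1_right) (simp add: diag_list_pair s_def)
  have "invertible_mat P"
  proof (rule invertible_matI)
    show "P * mat2 p (- w) (- s) (- u) = 1\<^sub>m 2" and "mat2 p (- w) (- s) (- u) * P = 1\<^sub>m 2"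
      unfolding P_def mat2_mult mat2_one[symmetric] using uw by (simp_all add: algebra_simps)
  qed (simp_all add: P_def)
  have "invertible_mat Q"
  proof (rule invertible_matI)
    show "Q * mat2 (w * s) (u * p) 1 (- 1) = 1\<^sub>m 2" and "mat2 (w * s) (u * p) 1 (- 1) * Q = 1\<^sub>m 2"
      unfolding Q_def mat2_mult mat2_one[symmetric] using uw by (simp_all add: algebra_simps)
  qed (simp_all add: Q_def)
  have "mat_star B = c \<cdot>\<^sub>m B"
    unfolding B_def mat2_star mat2_smult using assms(1) by (simp add: s_def algebra_simps)
  with PBQ \<open>invertible_mat P\<close> \<open>invertible_mat Q\<close> show ?thesis
    by (intro realizableI[of B _ P Q]) (simp_all add: B_def P_def Q_def mat2_carrier[unfolded numeral_2_eq_2])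
qed

lemma realizable_append:
  assumes "realizable c xs" and "realizable c ys"
  shows "realizable c (xs @ ys)"
proof -
  obtain A P Q where A: "A \<in> carrier_mat (length xs) (length xs)"
    and P: "P \<in> carrier_mat (length xs) (length xs)" "invertible_mat P"
    and Q: "Q \<in> carrier_mat (length xs) (length xs)" "invertible_mat Q"
    and "mat_star A = c \<cdot>\<^sub>m A" "P * A * Q = diag_list xs"
    using assms(1) unfolding realizable_def by blast
  obtain A' P' Q' where A': "A' \<in> carrier_mat (length ys) (length ys)"
    and P': "P' \<in> carrier_mat (length ys) (length ys)" "invertible_mat P'"
    and Q': "Q' \<in> carrier_mat (length ys) (length ys)" "invertible_mat Q'"
    and "mat_star A' = c \<cdot>\<^sub>m A'" "P' * A' * Q' = diag_list ys"
    using assms(2) unfolding realizable_def by blast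
  have "block_diag P P' * block_diag A A' * block_diag Q Q' = block_diag (P * A) (P' * A') * block_diag Q Q'"
    by (simp only: block_diag_mult[OF P(1) A P'(1) A'])
  also have "\<dots> = block_diag (P * A * Q) (P' * A' * Q')"
    using block_diag_mult[OF mult_carrier_mat[OF P(1) A] Q(1) mult_carrier_mat[OF P'(1) A'] Q'(1)] A P' by simp
  also have "\<dots> = diag_list (xs @ ys)"
    by (simp add: \<open>P * A * Q = diag_list xs\<close> \<open>P' * A' * Q' = diag_list ys\<close> diag_list_append)
  finally have "block_diag P P' * block_diag A A' * block_diag Q Q' = diag_list (xs @ ys)" .
  moreover have "mat_star (block_diag A A') = block_diag (mat_star A) (mat_star A')"
    by (rule block_diag_mat_star[OF A A'])
  then have "mat_star (block_diag A A') = c \<cdot>\<^sub>m block_diag A A'"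
    using \<open>mat_star A = c \<cdot>\<^sub>m A\<close> \<open>mat_star A' = c \<cdot>\<^sub>m A'\<close> block_diag_smult[OF A A'] by simp
  ultimately show ?thesis
    using block_diag_carrier[OF A A'] block_diag_carrier[OF P(1) P'(1)] block_diag_carrier[OF Q(1) Q'(1)]
      block_diag_invertible[OF P P'] block_diag_invertible[OF Q Q']
    by (intro realizableI[of "block_diag A A'" _ "block_diag P P'" "block_diag Q Q'"]) simp_all
qed

lemma run_conditions_drop_prefix:
  assumes "run_conditions P (xs @ ys)"
    and lift: "\<And>i j. maximal_run P ys i j \<Longrightarrow>
      \<exists>i'. maximal_run P (xs @ ys) i' (j + length xs) \<and> i' \<le> i + length xs \<and> even (i + length xs - i')"
  shows "run_conditions P ys"
  unfolding run_conditions_def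
proof (intro allI impI conjI)
  fix i j
  assume run: "maximal_run P ys i j"
  then obtain i' where run': "maximal_run P (xs @ ys) i' (j + length xs)"
    and "i' \<le> i + length xs" and offset: "even (i + length xs - i')"
    using lift by blast
  have "i \<le> j"
    using run by (simp add: maximal_run_def)
  with \<open>i' \<le> i + length xs\<close> have "j + length xs - i' = (j - i) + (i + length xs - i')"
    by simp
  with assms(1) run' offset show "even (j - i + 1)"
    unfolding run_conditions_def by fastforce
  fix k
  assume k: "i \<le> k \<and> k < j \<and> even (k - i)"
  with \<open>i' \<le> i + length xs\<close> have shift: "k + length xs - i' = (k - i) + (i + length xs - i')"
    by simp
  have "even ((k - i) + (i + length xs - i'))"
    using dvd_add[of 2 "k - i" "i + length xs - i'"] k offset by blast
  with k \<open>i' \<le> i + length xs\<close>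
  have "i' \<le> k + length xs \<and> k + length xs < j + length xs \<and> even (k + length xs - i')"
    by (simp only: shift) simp
  with assms(1) run'
  obtain p where "pure p" and "(xs @ ys) ! (k + length xs + 1) = (xs @ ys) ! (k + length xs) * p * pstar p"
    unfolding run_conditions_def by blast
  then show "\<exists>p. pure p \<and> ys ! (k + 1) = ys ! k * p * pstar p"
    by (auto simp: nth_append)
qed

lemma maximal_run_Cons:
  assumes "maximal_run P xs i j" and "i = 0 \<Longrightarrow> \<not> P x"
  shows "maximal_run P (x # xs) (Suc i) (Suc j)"
  unfolding maximal_run_def
proof (intro conjI allI impI)
  fix k
  assume "Suc i \<le> k \<and> k \<le> Suc j"
  then obtain k' where "k = Suc k'" and "i \<le> k'" and "k' \<le> j"
    by (cases k) auto
  with assms(1) show "P ((x # xs) ! k)"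
    by (simp add: maximal_run_def)
next
  show "Suc i = 0 \<or> \<not> P ((x # xs) ! (Suc i - 1))"
    using assms by (cases i) (auto simp: maximal_run_def)
qed (use assms(1) in \<open>auto simp: maximal_run_def\<close>)

lemma maximal_run_Cons_0:
  assumes "maximal_run P xs 0 j" and "P x"
  shows "maximal_run P (x # xs) 0 (Suc j)"
  using assms unfolding maximal_run_def by (auto simp: nth_Cons')

lemma run_conditions_Cons:
  assumes "\<not> P f" and "run_conditions P (f # ys)"
  shows "run_conditions P ys"
proof (rule run_conditions_drop_prefix[of P "[f]"])
  show "run_conditions P ([f] @ ys)"
    using assms(2) by simp
  fix i j
  assume "maximal_run P ys i j"
  then have "maximal_run P ([f] @ ys) (Suc i) (j + length [f])"
    using maximal_run_Cons[of P ys i j f] assms(1) by simp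
  then show "\<exists>i'. maximal_run P ([f] @ ys) i' (j + length [f]) \<and> i' \<le> i + length [f] \<and> even (i + length [f] - i')"
    by force
qed

lemma run_conditions_Cons_Cons:
  assumes "P f" and "P g" and "run_conditions P (f # g # zs)"
  shows "run_conditions P zs"
proof (rule run_conditions_drop_prefix[of P "[f, g]"])
  show "run_conditions P ([f, g] @ zs)"
    using assms(3) by simp
  fix i j
  assume run: "maximal_run P zs i j"
  show "\<exists>i'. maximal_run P ([f, g] @ zs) i' (j + length [f, g]) \<and> i' \<le> i + length [f, g]
      \<and> even (i + length [f, g] - i')"
  proof (cases "i = 0")
    case True
    with run assms(1,2) have "maximal_run P ([f, g] @ zs) 0 (j + length [f, g])"
      by (simp add: maximal_run_Cons_0)
    with True show ?thesis
      by force
  next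
    case False
    with run have "maximal_run P ([f, g] @ zs) (Suc (Suc i)) (j + length [f, g])"
      by (simp add: maximal_run_Cons)
    then show ?thesis
      by force
  qed
qed

lemma maximal_run_from_0:
  assumes "P (xs ! 0)" and "xs \<noteq> []"
  shows "\<exists>j. maximal_run P xs 0 j"
proof -
  define stop where "stop j \<longleftrightarrow> j + 1 = length xs \<or> \<not> P (xs ! (j + 1))" for j
  have "stop (length xs - 1)"
    using assms(2) by (simp add: stop_def)
  define j where "j = (LEAST j. stop j)"
  have "stop j" and "j \<le> length xs - 1"
    using LeastI[of stop, OF \<open>stop (length xs - 1)\<close>] Least_le[of stop, OF \<open>stop (length xs - 1)\<close>]
    by (simp_all add: j_def)
  have "P (xs ! k)" if "k \<le> j" for k
  proof (cases k)
    case (Suc k')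
    with that have "\<not> stop k'"
      using not_less_Least[of k' stop] by (simp add: j_def)
    with Suc show ?thesis
      by (simp add: stop_def)
  qed (use assms(1) in simp)
  with \<open>stop j\<close> \<open>j \<le> length xs - 1\<close> assms(2) have "maximal_run P xs 0 j"
    by (cases xs) (auto simp: maximal_run_def stop_def)
  then show ?thesis
    by blast
qed

lemma run_conditions_take:
  assumes "\<And>i. r \<le> i \<Longrightarrow> i < length fs \<Longrightarrow> \<not> P (fs ! i)" and "r \<le> length fs"
    and "run_conditions P fs"
  shows "run_conditions P (take r fs)"
  unfolding run_conditions_def
proof (intro allI impI)
  fix i j
  assume "maximal_run P (take r fs) i j"
  then have run: "i \<le> j" "j < r" "\<And>k. i \<le> k \<Longrightarrow> k \<le> j \<Longrightarrow> P (fs ! k)"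
    "i = 0 \<or> \<not> P (fs ! (i - 1))" "j + 1 = r \<or> \<not> P (fs ! (j + 1))"
    using assms(2) unfolding maximal_run_def by (auto simp: min_def split: if_splits)
  have "j + 1 = length fs \<or> \<not> P (fs ! (j + 1))"
    using run(2,5) assms(1)[of "j + 1"] assms(2) by (cases "j + 1 < length fs") auto
  with run assms(2) have "maximal_run P fs i j"
    unfolding maximal_run_def by auto
  with assms(3) run(2) show "even (j - i + 1) \<and> (\<forall>k. i \<le> k \<and> k < j \<and> even (k - i) \<longrightarrow>
      (\<exists>p. pure p \<and> take r fs ! (k + 1) = take r fs ! k * p * pstar p))"
    unfolding run_conditions_def by auto
qed

lemma pstar_eq_if_not_opposite_parity:
  assumes "homogeneous f" and "c = 1 \<or> c = -1" and "\<not> opposite_parity c f"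
  shows "pstar f = c * f"
proof (cases "f = 0")
  case False
  moreover have "pstar f = f \<or> pstar f = - f"
    using assms(1) by (simp add: homogeneous_def even_poly_def odd_poly_def)
  ultimately show ?thesis
    using assms(2,3) by (auto simp: opposite_parity_def)
qed simp

lemma realizable_if_run_conditions:
  fixes xs :: "'a::field poly list"
  assumes sign: "c = 1 \<or> c = -1" and "\<forall>x\<in>set xs. homogeneous x"
    and "run_conditions (opposite_parity c) xs"
  shows "realizable c xs"
  using assms(2,3)
proof (induction xs rule: length_induct)
  case (1 xs)
  show ?case
  proof (cases xs)
    case Nil
    then show ?thesis
      by (simp add: realizable_Nil)
  next
    case (Cons f ys)
    show ?thesis
    proof (cases "opposite_parity c f")
      case False
      with "1.prems"(1) Cons sign have "pstar f = c * f"
        by (simp add: pstar_eq_if_not_opposite_parity)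
      moreover have "realizable c ys"
        using "1.IH" "1.prems" Cons run_conditions_Cons[of "opposite_parity c" f ys] False by simp
      ultimately show ?thesis
        using realizable_append[OF realizable_single] Cons by simp
    next
      case True
      then obtain j where run: "maximal_run (opposite_parity c) xs 0 j"
        using Cons maximal_run_from_0[of "opposite_parity c" xs] by auto
      with "1.prems"(2) have "even (j + 1)"
        and pair: "\<And>k. k < j \<and> even k \<Longrightarrow> \<exists>p. pure p \<and> xs ! (k + 1) = xs ! k * p * pstar p"
        unfolding run_conditions_def by auto
      then have "1 \<le> j"
        by (cases j) auto
      with run Cons obtain g zs where xs: "xs = f # g # zs" and "opposite_parity c g"
        by (cases ys) (auto simp: maximal_run_def)
      obtain p where "pure p" and "g = f * p * pstar p"
        using pair[of 0] \<open>1 \<le> j\<close> xs by auto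
      with True have "realizable c [f, g]"
        using realizable_pair[of f c p] by (simp add: opposite_parity_def)
      moreover have "realizable c zs"
        using "1.IH" "1.prems" xs run_conditions_Cons_Cons[OF True \<open>opposite_parity c g\<close>] by simp
      ultimately show ?thesis
        using realizable_append xs by fastforce
    qed
  qed
qed

lemma realizable_append_zeros:
  fixes xs :: "'a::field poly list"
  assumes "realizable c xs" and "0 \<notin> set xs"
  obtains A P Q where "A \<in> carrier_mat (length xs + m) (length xs + m)"
    and "P \<in> carrier_mat (length xs + m) (length xs + m)" and "invertible_mat P"
    and "Q \<in> carrier_mat (length xs + m) (length xs + m)" and "invertible_mat Q"
    and "mat_star A = c \<cdot>\<^sub>m A" and "det_rank A = length xs"
    and "P * A * Q = diag_list (xs @ replicate m 0)"
proof -
  let ?k = "length xs"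
  obtain A1 P1 Q1 where A1: "A1 \<in> carrier_mat ?k ?k"
    and P1: "P1 \<in> carrier_mat ?k ?k" "invertible_mat P1" and Q1: "Q1 \<in> carrier_mat ?k ?k" "invertible_mat Q1"
    and "mat_star A1 = c \<cdot>\<^sub>m A1" and PAQ: "P1 * A1 * Q1 = diag_list xs"
    using assms(1) unfolding realizable_def by blast
  have "det P1 * det A1 * det Q1 = prod_list xs"
    using PAQ det_mult[OF mult_carrier_mat[OF P1(1) A1] Q1(1)] det_mult[OF P1(1) A1]
    by (simp add: det_diag_list)
  with assms(2) have "det A1 \<noteq> 0"
    by (auto simp: prod_list_zero_iff)
  define A where "A = block_diag A1 (0\<^sub>m m m)"
  define P where "P = block_diag P1 (1\<^sub>m m)"
  define Q where "Q = block_diag Q1 (1\<^sub>m m)"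
  have "P * A * Q = block_diag (P1 * A1 * Q1) (1\<^sub>m m * 0\<^sub>m m m * 1\<^sub>m m)"
    using block_diag_mult[OF P1(1) A1 one_carrier_mat zero_carrier_mat]
      block_diag_mult[OF mult_carrier_mat[OF P1(1) A1] Q1(1), of "1\<^sub>m m * 0\<^sub>m m m" m "1\<^sub>m m"]
    by (simp add: P_def A_def Q_def)
  also have "\<dots> = diag_list (xs @ replicate m 0)"
    by (simp add: PAQ diag_list_append) (auto simp: diag_list_def)
  finally have "P * A * Q = diag_list (xs @ replicate m 0)" .
  have "mat_star A = block_diag (mat_star A1) (mat_star (0\<^sub>m m m))"
    unfolding A_def by (rule block_diag_mat_star[OF A1 zero_carrier_mat])
  also have "mat_star (0\<^sub>m m m) = c \<cdot>\<^sub>m (0\<^sub>m m m :: 'a poly mat)"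
    by (rule eq_matI) simp_all
  also have "block_diag (mat_star A1) (c \<cdot>\<^sub>m 0\<^sub>m m m) = block_diag (c \<cdot>\<^sub>m A1) (c \<cdot>\<^sub>m 0\<^sub>m m m)"
    by (simp only: \<open>mat_star A1 = c \<cdot>\<^sub>m A1\<close>)
  also have "\<dots> = c \<cdot>\<^sub>m A"
    unfolding A_def by (rule block_diag_smult[OF A1 zero_carrier_mat, symmetric])
  finally have "mat_star A = c \<cdot>\<^sub>m A" .
  moreover have "det_rank A = ?k"
    unfolding A_def using A1 \<open>det A1 \<noteq> 0\<close> by (rule det_rank_block_diag_zero)
  moreover have "A \<in> carrier_mat (?k + m) (?k + m)"
    unfolding A_def by (rule block_diag_carrier[OF A1 zero_carrier_mat])
  moreover have "P \<in> carrier_mat (?k + m) (?k + m)" and "invertible_mat P"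
    unfolding P_def by (rule block_diag_carrier[OF P1(1) one_carrier_mat])
      (rule block_diag_invertible[OF P1 one_carrier_mat invertible_mat_one])
  moreover have "Q \<in> carrier_mat (?k + m) (?k + m)" and "invertible_mat Q"
    unfolding Q_def by (rule block_diag_carrier[OF Q1(1) one_carrier_mat])
      (rule block_diag_invertible[OF Q1 one_carrier_mat invertible_mat_one])
  ultimately show ?thesis
    using that \<open>P * A * Q = diag_list (xs @ replicate m 0)\<close> by blast
qed

lemma c_hermitian_if_run_conditions:
  fixes fs :: "'a::field poly list"
  assumes len: "length fs = n" and "r \<le> n"
    and hom: "\<forall>i < n. homogeneous (fs ! i)"
    and mon: "\<forall>i < r. lead_coeff (fs ! i) = 1"
    and dvd: "\<forall>i. i + 1 < r \<longrightarrow> fs ! i dvd fs ! (i + 1)"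
    and zero: "\<forall>i. r \<le> i \<and> i < n \<longrightarrow> fs ! i = 0"
    and sign: "c = 1 \<or> c = -1"
    and rc: "run_conditions (opposite_parity c) fs"
  shows "\<exists>A. mat_star A = c \<cdot>\<^sub>m A \<and> det_rank A = r \<and> invariant_factors A fs"
proof -
  define xs where "xs = take r fs"
  have "length xs = r"
    using len \<open>r \<le> n\<close> by (simp add: xs_def)
  have fs: "fs = xs @ replicate (n - r) 0"
    by (rule nth_equalityI) (use len \<open>r \<le> n\<close> zero in \<open>auto simp: xs_def nth_append\<close>)
  have "0 \<notin> set xs"
    using mon \<open>length xs = r\<close> by (auto simp: xs_def in_set_conv_nth)
  have "\<forall>x\<in>set xs. homogeneous x"
    using hom len \<open>r \<le> n\<close> by (auto simp: xs_def in_set_conv_nth)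
  moreover have "run_conditions (opposite_parity c) xs"
    unfolding xs_def using len \<open>r \<le> n\<close> zero rc
    by (intro run_conditions_take) (auto simp: opposite_parity_def)
  ultimately have "realizable c xs"
    using sign by (intro realizable_if_run_conditions)
  then obtain A P Q where "A \<in> carrier_mat n n" and PQ: "P \<in> carrier_mat n n" "invertible_mat P"
    "Q \<in> carrier_mat n n" "invertible_mat Q" "P * A * Q = diag_list fs"
    and "mat_star A = c \<cdot>\<^sub>m A" and "det_rank A = r"
    using realizable_append_zeros[OF _ \<open>0 \<notin> set xs\<close>, of c "n - r"] \<open>length xs = r\<close> \<open>r \<le> n\<close> fs
    by (metis le_add_diff_inverse)
  moreover have "invariant_factors A fs"
    unfolding invariant_factors_def Let_def len
  proof (intro conjI allI impI)
    fix i
    assume "i + 1 < n"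
    then show "fs ! i dvd fs ! (i + 1)"
      using dvd zero by (cases "i + 1 < r") auto
  next
    fix i
    assume "i < n" and "fs ! i \<noteq> 0"
    then show "lead_coeff (fs ! i) = 1"
      using mon zero by (cases "i < r") auto
  qed (use \<open>A \<in> carrier_mat n n\<close> PQ in blast)+
  ultimately show ?thesis
    by blast
qed

theorem theorem5p1:
  fixes fs :: "'a::alg_closed_field poly list" and n r :: nat
  assumes char: "(2::'a) \<noteq> 0"
    and len: "length fs = n"
    and rn: "r \<le> n"
    and hom: "\<forall>i < n. homogeneous (fs ! i)"
    and mon: "\<forall>i < r. lead_coeff (fs ! i) = 1"
    and dvd: "\<forall>i. i + 1 < r \<longrightarrow> fs ! i dvd fs ! (i + 1)"
    and zero: "\<forall>i. r \<le> i \<and> i < n \<longrightarrow> fs ! i = 0"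
  shows "((\<exists>A. hermitian A \<and> det_rank A = r \<and> invariant_factors A fs) \<longleftrightarrow>
            run_conditions (\<lambda>a. a \<noteq> 0 \<and> odd_poly a) fs)
       \<and> ((\<exists>A. skew_hermitian A \<and> det_rank A = r \<and> invariant_factors A fs) \<longleftrightarrow>
            run_conditions (\<lambda>a. a \<noteq> 0 \<and> even_poly a) fs)"
proof -
  have iff: "(\<exists>A. mat_star A = c \<cdot>\<^sub>m A \<and> det_rank A = r \<and> invariant_factors A fs)
      \<longleftrightarrow> run_conditions (opposite_parity c) fs" if "c = 1 \<or> c = -1" for c
    using run_conditions_if_c_hermitian[OF assms that] c_hermitian_if_run_conditions[OF len rn hom mon dvd zero that]
    by blast
  have "hermitian A \<longleftrightarrow> mat_star A = 1 \<cdot>\<^sub>m A" and "skew_hermitian A \<longleftrightarrow> mat_star A = (-1) \<cdot>\<^sub>m A"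
    for A :: "'a poly mat"
    by (simp_all add: hermitian_def skew_hermitian_def smult_one_mat smult_minus_one_mat)
  moreover have "opposite_parity 1 = (\<lambda>a::'a poly. a \<noteq> 0 \<and> odd_poly a)"
    and "opposite_parity (-1) = (\<lambda>a::'a poly. a \<noteq> 0 \<and> even_poly a)"
    by (simp_all add: fun_eq_iff opposite_parity_def odd_poly_def even_poly_def)
  ultimately show ?thesis
    using iff[of 1] iff[of "-1"] by simp
qed

end
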